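(* Let $E$ be a connected graded Frobenius algebra with Nakayama automorphism $\mu_E$, and let $K$ be a Hopf algebra with antipode $S$ such that $E$ is a left $K$-comodule algebra with grading-preserving coaction $\rho$ whose restriction to $E_1$ is inner-faithful. Let ${\sf D}\in K$ be the homological codeterminant. Choose a basis $\{a_i\}_{i=1}^n$ of $E_1$, let $\alpha=(\alpha_{ij})$ be given by $\mu_E(a_i)=\sum_j\alpha_{ij}a_j$, and write $\rho(a_i)=\sum_s y_{is}\otimes a_s$, $\mathbb Y=(y_{ij})$. Then the assignment $\mathbb Y\mapsto\alpha\mathbb Y\alpha^{-1}$ (i.e. $y_{ij}\mapsto(\alpha\mathbb Y\alpha^{-1})_{ij}$) extends to a unique Hopf algebra endomorphism $\eta_{\mu_E}$ of $K$, which satisfies $\eta_{\mu_E}(y_{ij})={\sf D}^{-1}S^2(y_{ij}){\sf D}$ for all $i,j$ and in fact $\eta_{\mu_E}=\eta_{\sf D}\circ S^2$ on $K$, where $\eta_{\sf D}(a)={\sf D}^{-1}a{\sf D}$. Consequently $S$ is surjective (and $\eta_{\mu_E}$ does not depend on the choice of basis).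
   Context: A connected graded algebra $E$ is Frobenius if it is finite dimensional with a nondegenerate associative graded bilinear form $\langle-,-\rangle$; its (classical) Nakayama automorphism $\mu_E$ is the graded automorphism with $\langle a,b\rangle=\langle b,\mu_E(a)\rangle$. The top nonzero degree $E_l$ is one-dimensional, spanned by $\mathfrak e$; the homological codeterminant is the grouplike ${\sf D}\in K$ with $\rho(\mathfrak e)={\sf D}\otimes\mathfrak e$. The left coaction on $E_1$ is inner-faithful if $\rho(E_1)\not\subseteq K'\otimes E_1$ for every proper Hopf subalgebra $K'\subsetneq K$. *)

theory Defs
  imports Complex_Main "HOL-Library.Function_Algebras"
begin

text \<open>An element of V \<otimes> W is represented by a list of pairs (a formal sum of
pure tensors; scalars are absorbed into the first factor).  Two representatives
are equal in V \<otimes> W iff their difference in the free k-vector space on V \<times> W lies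
in the span of the bilinearity relations (the textbook construction).\<close>

definition fvec :: "'x list \<Rightarrow> 'x \<Rightarrow> 'k::comm_ring_1" where
  "fvec t = (\<lambda>p. of_nat (count_list t p))"

definition dlt :: "'x \<Rightarrow> 'x \<Rightarrow> 'k::comm_ring_1" where
  "dlt p = (\<lambda>q. if q = p then 1 else 0)"

definition fscale :: "'k::comm_ring_1 \<Rightarrow> ('x \<Rightarrow> 'k) \<Rightarrow> ('x \<Rightarrow> 'k)" where
  "fscale c f = (\<lambda>p. c * f p)"

definition tens_rel2 ::
  "('k::field \<Rightarrow> 'a::ab_group_add \<Rightarrow> 'a) \<Rightarrow> ('k \<Rightarrow> 'b::ab_group_add \<Rightarrow> 'b) \<Rightarrow> ('a \<times> 'b \<Rightarrow> 'k) set" where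
  "tens_rel2 s1 s2 =
     {dlt (x + x', y) - dlt (x, y) - dlt (x', y) | x x' y. True} \<union>
     {dlt (x, y + y') - dlt (x, y) - dlt (x, y') | x y y'. True} \<union>
     {dlt (s1 c x, y) - fscale c (dlt (x, y)) | c x y. True} \<union>
     {dlt (x, s2 c y) - fscale c (dlt (x, y)) | c x y. True}"

definition teq2 ::
  "('k::field \<Rightarrow> 'a::ab_group_add \<Rightarrow> 'a) \<Rightarrow> ('k \<Rightarrow> 'b::ab_group_add \<Rightarrow> 'b) \<Rightarrow>
   ('a \<times> 'b) list \<Rightarrow> ('a \<times> 'b) list \<Rightarrow> bool" where
  "teq2 s1 s2 t u \<longleftrightarrow> fvec t - fvec u \<in> module.span fscale (tens_rel2 s1 s2)"

definition tens_rel3 ::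
  "('k::field \<Rightarrow> 'a::ab_group_add \<Rightarrow> 'a) \<Rightarrow> ('k \<Rightarrow> 'b::ab_group_add \<Rightarrow> 'b) \<Rightarrow>
   ('k \<Rightarrow> 'c::ab_group_add \<Rightarrow> 'c) \<Rightarrow> ('a \<times> 'b \<times> 'c \<Rightarrow> 'k) set" where
  "tens_rel3 s1 s2 s3 =
     {dlt (x + x', y, z) - dlt (x, y, z) - dlt (x', y, z) | x x' y z. True} \<union>
     {dlt (x, y + y', z) - dlt (x, y, z) - dlt (x, y', z) | x y y' z. True} \<union>
     {dlt (x, y, z + z') - dlt (x, y, z) - dlt (x, y, z') | x y z z'. True} \<union>
     {dlt (s1 c x, y, z) - fscale c (dlt (x, y, z)) | c x y z. True} \<union>
     {dlt (x, s2 c y, z) - fscale c (dlt (x, y, z)) | c x y z. True} \<union>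
     {dlt (x, y, s3 c z) - fscale c (dlt (x, y, z)) | c x y z. True}"

definition teq3 ::
  "('k::field \<Rightarrow> 'a::ab_group_add \<Rightarrow> 'a) \<Rightarrow> ('k \<Rightarrow> 'b::ab_group_add \<Rightarrow> 'b) \<Rightarrow>
   ('k \<Rightarrow> 'c::ab_group_add \<Rightarrow> 'c) \<Rightarrow> ('a \<times> 'b \<times> 'c) list \<Rightarrow> ('a \<times> 'b \<times> 'c) list \<Rightarrow> bool" where
  "teq3 s1 s2 s3 t u \<longleftrightarrow> fvec t - fvec u \<in> module.span fscale (tens_rel3 s1 s2 s3)"

definition tmul :: "('a::times \<times> 'b::times) list \<Rightarrow> ('a \<times> 'b) list \<Rightarrow> ('a \<times> 'b) list" where
  "tmul t u = concat (map (\<lambda>(x, y). map (\<lambda>(x', y'). (x * x', y * y')) u) t)"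

text \<open>(\<Delta> \<otimes> id) and (id \<otimes> \<delta>) on representatives.\<close>
definition left_apply :: "('a \<Rightarrow> ('a \<times> 'a) list) \<Rightarrow> ('a \<times> 'c) list \<Rightarrow> ('a \<times> 'a \<times> 'c) list" where
  "left_apply D t = concat (map (\<lambda>(x, z). map (\<lambda>(u, v). (u, v, z)) (D x)) t)"

definition right_apply :: "('c \<Rightarrow> ('b \<times> 'c) list) \<Rightarrow> ('a \<times> 'c) list \<Rightarrow> ('a \<times> 'b \<times> 'c) list" where
  "right_apply D t = concat (map (\<lambda>(x, z). map (\<lambda>(u, v). (x, u, v)) (D z)) t)"

definition k_algebra :: "('k::field \<Rightarrow> 'a::ring_1 \<Rightarrow> 'a) \<Rightarrow> bool" where
  "k_algebra s \<longleftrightarrow> vector_space s \<and>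
     (\<forall>c x y. s c (x * y) = s c x * y \<and> s c (x * y) = x * s c y)"

definition hopf_algebra ::
  "('k::field \<Rightarrow> 'a::ring_1 \<Rightarrow> 'a) \<Rightarrow> ('a \<Rightarrow> ('a \<times> 'a) list) \<Rightarrow> ('a \<Rightarrow> 'k) \<Rightarrow> ('a \<Rightarrow> 'a) \<Rightarrow> bool" where
  "hopf_algebra s \<Delta> \<epsilon> S \<longleftrightarrow> k_algebra s \<and>
     (\<forall>x y. teq2 s s (\<Delta> (x + y)) (\<Delta> x @ \<Delta> y)) \<and>
     (\<forall>c x. teq2 s s (\<Delta> (s c x)) (map (\<lambda>(u, v). (s c u, v)) (\<Delta> x))) \<and>
     (\<forall>x y. teq2 s s (\<Delta> (x * y)) (tmul (\<Delta> x) (\<Delta> y))) \<and>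
     teq2 s s (\<Delta> 1) [(1, 1)] \<and>
     (\<forall>x. teq3 s s s (left_apply \<Delta> (\<Delta> x)) (right_apply \<Delta> (\<Delta> x))) \<and>
     Vector_Spaces.linear s (*) \<epsilon> \<and> (\<forall>x y. \<epsilon> (x * y) = \<epsilon> x * \<epsilon> y) \<and> \<epsilon> 1 = 1 \<and>
     (\<forall>x. (\<Sum>(u, v)\<leftarrow>\<Delta> x. s (\<epsilon> u) v) = x) \<and>
     (\<forall>x. (\<Sum>(u, v)\<leftarrow>\<Delta> x. s (\<epsilon> v) u) = x) \<and>
     Vector_Spaces.linear s s S \<and>
     (\<forall>x. (\<Sum>(u, v)\<leftarrow>\<Delta> x. S u * v) = s (\<epsilon> x) 1) \<and>
     (\<forall>x. (\<Sum>(u, v)\<leftarrow>\<Delta> x. u * S v) = s (\<epsilon> x) 1)"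

definition hopf_subalgebra ::
  "('k::field \<Rightarrow> 'a::ring_1 \<Rightarrow> 'a) \<Rightarrow> ('a \<Rightarrow> ('a \<times> 'a) list) \<Rightarrow> ('a \<Rightarrow> 'a) \<Rightarrow> 'a set \<Rightarrow> bool" where
  "hopf_subalgebra s \<Delta> S K' \<longleftrightarrow> module.subspace s K' \<and> 1 \<in> K' \<and>
     (\<forall>x\<in>K'. \<forall>y\<in>K'. x * y \<in> K') \<and>
     (\<forall>x\<in>K'. \<exists>t. set t \<subseteq> K' \<times> K' \<and> teq2 s s (\<Delta> x) t) \<and>
     S ` K' \<subseteq> K'"

definition hopf_endo ::
  "('k::field \<Rightarrow> 'a::ring_1 \<Rightarrow> 'a) \<Rightarrow> ('a \<Rightarrow> ('a \<times> 'a) list) \<Rightarrow> ('a \<Rightarrow> 'k) \<Rightarrow> ('a \<Rightarrow> 'a) \<Rightarrow>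
   ('a \<Rightarrow> 'a) \<Rightarrow> bool" where
  "hopf_endo s \<Delta> \<epsilon> S f \<longleftrightarrow> Vector_Spaces.linear s s f \<and>
     (\<forall>x y. f (x * y) = f x * f y) \<and> f 1 = 1 \<and>
     (\<forall>x. teq2 s s (\<Delta> (f x)) (map (\<lambda>(u, v). (f u, f v)) (\<Delta> x))) \<and>
     (\<forall>x. \<epsilon> (f x) = \<epsilon> x) \<and> (\<forall>x. S (f x) = f (S x))"

definition ring_inv :: "'a::ring_1 \<Rightarrow> 'a" where
  "ring_inv x = (THE y. x * y = 1 \<and> y * x = 1)"

definition connected_graded_algebra ::
  "('k::field \<Rightarrow> 'e::ring_1 \<Rightarrow> 'e) \<Rightarrow> (nat \<Rightarrow> 'e set) \<Rightarrow> bool" where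
  "connected_graded_algebra s Egr \<longleftrightarrow> k_algebra s \<and>
     (\<forall>d. module.subspace s (Egr d)) \<and>
     (\<forall>e. \<exists>!c. (\<forall>d. c d \<in> Egr d) \<and> finite {d. c d \<noteq> 0} \<and> e = (\<Sum>d\<in>{d. c d \<noteq> 0}. c d)) \<and>
     (\<forall>i j. \<forall>x\<in>Egr i. \<forall>y\<in>Egr j. x * y \<in> Egr (i + j)) \<and>
     Egr 0 = range (\<lambda>c. s c 1)"

definition graded_frobenius ::
  "('k::field \<Rightarrow> 'e::ring_1 \<Rightarrow> 'e) \<Rightarrow> (nat \<Rightarrow> 'e set) \<Rightarrow> nat \<Rightarrow> ('e \<Rightarrow> 'e \<Rightarrow> 'k) \<Rightarrow> bool" where
  "graded_frobenius s Egr l B \<longleftrightarrow>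
     (\<exists>F. finite F \<and> module.span s F = UNIV) \<and>
     Egr l \<noteq> {0} \<and> (\<forall>d>l. Egr d = {0}) \<and>
     (\<forall>b. Vector_Spaces.linear s (*) (\<lambda>a. B a b)) \<and>
     (\<forall>a. Vector_Spaces.linear s (*) (\<lambda>b. B a b)) \<and>
     (\<forall>a b c. B (a * b) c = B a (b * c)) \<and>
     (\<forall>a. (\<forall>b. B a b = 0) \<longrightarrow> a = 0) \<and>
     (\<forall>b. (\<forall>a. B a b = 0) \<longrightarrow> b = 0) \<and>
     (\<forall>i j a b. a \<in> Egr i \<longrightarrow> b \<in> Egr j \<longrightarrow> i + j \<noteq> l \<longrightarrow> B a b = 0)"

definition nakayama_aut ::
  "('k::field \<Rightarrow> 'e::ring_1 \<Rightarrow> 'e) \<Rightarrow> (nat \<Rightarrow> 'e set) \<Rightarrow> ('e \<Rightarrow> 'e \<Rightarrow> 'k) \<Rightarrow> ('e \<Rightarrow> 'e) \<Rightarrow> bool" where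
  "nakayama_aut s Egr B \<mu> \<longleftrightarrow> Vector_Spaces.linear s s \<mu> \<and> bij \<mu> \<and>
     (\<forall>x y. \<mu> (x * y) = \<mu> x * \<mu> y) \<and> \<mu> 1 = 1 \<and>
     (\<forall>d. \<mu> ` Egr d = Egr d) \<and>
     (\<forall>a b. B a b = B b (\<mu> a))"

definition graded_comodule_algebra ::
  "('k::field \<Rightarrow> 'a::ring_1 \<Rightarrow> 'a) \<Rightarrow> ('a \<Rightarrow> ('a \<times> 'a) list) \<Rightarrow> ('a \<Rightarrow> 'k) \<Rightarrow>
   ('k \<Rightarrow> 'e::ring_1 \<Rightarrow> 'e) \<Rightarrow> (nat \<Rightarrow> 'e set) \<Rightarrow> ('e \<Rightarrow> ('a \<times> 'e) list) \<Rightarrow> bool" where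
  "graded_comodule_algebra sK \<Delta> \<epsilon> sE Egr \<rho> \<longleftrightarrow>
     (\<forall>x y. teq2 sK sE (\<rho> (x + y)) (\<rho> x @ \<rho> y)) \<and>
     (\<forall>c x. teq2 sK sE (\<rho> (sE c x)) (map (\<lambda>(u, v). (sK c u, v)) (\<rho> x))) \<and>
     (\<forall>x. teq3 sK sK sE (left_apply \<Delta> (\<rho> x)) (right_apply \<rho> (\<rho> x))) \<and>
     (\<forall>x. (\<Sum>(u, v)\<leftarrow>\<rho> x. sE (\<epsilon> u) v) = x) \<and>
     (\<forall>x y. teq2 sK sE (\<rho> (x * y)) (tmul (\<rho> x) (\<rho> y))) \<and>
     teq2 sK sE (\<rho> 1) [(1, 1)] \<and>
     (\<forall>d. \<forall>x\<in>Egr d. \<exists>t. snd ` set t \<subseteq> Egr d \<and> teq2 sK sE (\<rho> x) t)"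

definition inner_faithful_E1 ::
  "('k::field \<Rightarrow> 'a::ring_1 \<Rightarrow> 'a) \<Rightarrow> ('a \<Rightarrow> ('a \<times> 'a) list) \<Rightarrow> ('a \<Rightarrow> 'a) \<Rightarrow>
   ('k \<Rightarrow> 'e::ring_1 \<Rightarrow> 'e) \<Rightarrow> (nat \<Rightarrow> 'e set) \<Rightarrow> ('e \<Rightarrow> ('a \<times> 'e) list) \<Rightarrow> bool" where
  "inner_faithful_E1 sK \<Delta> S sE Egr \<rho> \<longleftrightarrow>
     (\<forall>K'. hopf_subalgebra sK \<Delta> S K' \<and> K' \<noteq> UNIV \<longrightarrow>
        \<not> (\<forall>x\<in>Egr 1. \<exists>t. set t \<subseteq> K' \<times> Egr 1 \<and> teq2 sK sE (\<rho> x) t))"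

section \<open>Square matrices as functions on indices < n\<close>

definition mat_inv :: "nat \<Rightarrow> (nat \<Rightarrow> nat \<Rightarrow> 'k::field) \<Rightarrow> (nat \<Rightarrow> nat \<Rightarrow> 'k)" where
  "mat_inv n A = (THE B. (\<forall>i j. (n \<le> i \<or> n \<le> j) \<longrightarrow> B i j = 0) \<and>
      (\<forall>i<n. \<forall>j<n. (\<Sum>k<n. A i k * B k j) = (if i = j then 1 else 0)) \<and>
      (\<forall>i<n. \<forall>j<n. (\<Sum>k<n. B i k * A k j) = (if i = j then 1 else 0)))"

end

theory Submission
  imports Defs
begin

text \<open>
  Let \<open>\<psi> = B(-, 1)\<close> be the Frobenius functional, so that \<open>B(x, z) = \<psi>(x z)\<close> and \<open>\<psi>\<close>
  vanishes outside the top degree \<open>E\<^sub>l = k fe\<close>. As \<open>\<rho>(fe) = D \<otimes> fe\<close>, applying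
  \<open>id \<otimes> \<psi>\<close> to the coaction gives \<open>(id \<otimes> \<psi>) \<rho>(w) = \<psi>(w) D\<close>. Expanding this for
  \<open>w = z a\<^sub>i\<close> and \<open>w = a\<^sub>i z\<close> by multiplicativity of \<open>\<rho>\<close>, and using the Nakayama relation
  \<open>\<psi>(a\<^sub>i z) = \<Sum>\<^sub>j \<alpha>\<^sub>i\<^sub>j \<psi>(z a\<^sub>j)\<close>, gives two linear relations between \<open>Y\<close>, \<open>D\<close> and the
  elements \<open>(id \<otimes> \<psi>(- a\<^sub>j)) \<rho>(z)\<close> of \<open>K\<close>. Applying the antipode, using that \<open>Y\<close> is
  invertible with inverse \<open>S(Y)\<close>, and nondegeneracy of \<open>B\<close>, they combine to
  \<open>D\<^sup>-\<^sup>1 S\<^sup>2(Y) D = \<alpha> Y \<alpha>\<^sup>-\<^sup>1\<close>.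

  Since \<open>D\<close> is grouplike, \<open>\<eta> = D\<^sup>-\<^sup>1 S\<^sup>2(-) D\<close> is a Hopf endomorphism. By inner-faithfulness
  the entries of \<open>Y\<close> generate \<open>K\<close> as an algebra closed under \<open>S\<close>, so \<open>\<eta>\<close> is the only
  Hopf endomorphism extending \<open>Y \<mapsto> \<alpha> Y \<alpha>\<^sup>-\<^sup>1\<close>; and as its image contains
  \<open>\<alpha>\<^sup>-\<^sup>1 \<eta>(Y) \<alpha> = Y\<close>, it is surjective, hence so is \<open>S\<close>.
\<close>

definition supp :: "('x \<Rightarrow> 'k::zero) \<Rightarrow> 'x set" where
  "supp F = {p. F p \<noteq> 0}"

definition lin_ext :: "('x \<Rightarrow> 'k::comm_ring_1) \<Rightarrow> ('x \<Rightarrow> 'k) \<Rightarrow> 'k" where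
  "lin_ext g F = (\<Sum>p\<in>supp F. F p * g p)"

lemma lin_ext_superset:
  assumes "finite A" "supp F \<subseteq> A"
  shows "lin_ext g F = (\<Sum>p\<in>A. F p * g p)"
  unfolding lin_ext_def
  by (rule sum.mono_neutral_left) (use assms in \<open>auto simp: supp_def\<close>)

lemma supp_add: "supp (F + G) \<subseteq> supp F \<union> supp (G :: 'x \<Rightarrow> 'k::comm_ring_1)"
  by (auto simp: supp_def)
lemma supp_diff: "supp (F - G) \<subseteq> supp F \<union> supp (G :: 'x \<Rightarrow> 'k::comm_ring_1)"
  by (auto simp: supp_def)
lemma supp_fscale: "supp (fscale c F) \<subseteq> supp F"
  by (auto simp: supp_def fscale_def)
lemma supp_dlt: "supp (dlt q :: 'x \<Rightarrow> 'k::comm_ring_1) \<subseteq> {q}"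
  by (auto simp: supp_def dlt_def)
lemma supp_zero[simp]: "supp 0 = {}"
  by (auto simp: supp_def)

definition fin_supp :: "('x \<Rightarrow> 'k::zero) \<Rightarrow> bool" where
  "fin_supp F \<longleftrightarrow> finite (supp F)"

lemma fin_supp_add: "fin_supp F \<Longrightarrow> fin_supp G \<Longrightarrow> fin_supp (F + (G :: 'x \<Rightarrow> 'k::comm_ring_1))"
  unfolding fin_supp_def using supp_add[of F G] by (rule finite_subset) simp
lemma fin_supp_diff: "fin_supp F \<Longrightarrow> fin_supp G \<Longrightarrow> fin_supp (F - (G :: 'x \<Rightarrow> 'k::comm_ring_1))"
  unfolding fin_supp_def using supp_diff[of F G] by (rule finite_subset) simp
lemma fin_supp_fscale: "fin_supp F \<Longrightarrow> fin_supp (fscale c F)"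
  unfolding fin_supp_def using supp_fscale[of c F] by (rule finite_subset)
lemma fin_supp_dlt: "fin_supp (dlt q :: 'x \<Rightarrow> 'k::comm_ring_1)"
  unfolding fin_supp_def using supp_dlt[of q] by (rule finite_subset) simp
lemma fin_supp_zero: "fin_supp 0"
  unfolding fin_supp_def by simp

lemma lin_ext_add: "fin_supp F \<Longrightarrow> fin_supp G \<Longrightarrow> lin_ext g (F + G) = lin_ext g F + lin_ext g G"
  apply (subst (1 2 3) lin_ext_superset[where A="supp F \<union> supp G"])
  using supp_add[of F G] by (auto simp: fin_supp_def sum.distrib algebra_simps)

lemma lin_ext_diff: "fin_supp F \<Longrightarrow> fin_supp G \<Longrightarrow> lin_ext g (F - G) = lin_ext g F - lin_ext g G"
  apply (subst (1 2 3) lin_ext_superset[where A="supp F \<union> supp G"])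
  using supp_diff[of F G] by (auto simp: fin_supp_def sum_subtractf algebra_simps)

lemma lin_ext_fscale: "fin_supp F \<Longrightarrow> lin_ext g (fscale c F) = c * lin_ext g F"
  apply (subst (1 2) lin_ext_superset[where A="supp F"])
  using supp_fscale[of c F] by (auto simp: fin_supp_def sum_distrib_left fscale_def algebra_simps)

lemma lin_ext_dlt: "lin_ext g (dlt q) = g q"
  apply (subst lin_ext_superset[where A="{q}"])
  using supp_dlt[of q] by (auto simp: dlt_def)

lemma lin_ext_zero: "lin_ext g 0 = 0"
  by (simp add: lin_ext_def)

lemma fvec_Nil: "fvec [] = 0"
  by (auto simp: fvec_def)
lemma fvec_Cons: "(fvec (p # t) :: 'x \<Rightarrow> 'k::comm_ring_1) = dlt p + fvec t"
  by (auto simp: fvec_def dlt_def)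

lemma fin_supp_fvec: "fin_supp (fvec t :: 'x \<Rightarrow> 'k::comm_ring_1)"
proof (induct t)
  case Nil show ?case by (subst fvec_Nil) (rule fin_supp_zero)
next
  case (Cons p t) show ?case by (subst fvec_Cons) (rule fin_supp_add[OF fin_supp_dlt Cons])
qed

lemma lin_ext_fvec: "lin_ext g (fvec t) = sum_list (map g t)"
proof (induct t)
  case Nil show ?case by (subst fvec_Nil) (simp add: lin_ext_zero)
next
  case (Cons p t) show ?case
    by (subst fvec_Cons, subst lin_ext_add[OF fin_supp_dlt fin_supp_fvec]) (simp add: lin_ext_dlt Cons)
qed

lemma module_fscale: "module (fscale :: 'k::comm_ring_1 \<Rightarrow> ('x \<Rightarrow> 'k) \<Rightarrow> _)"
  by unfold_locales (auto simp: fscale_def algebra_simps)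

lemma vector_space_fscale: "vector_space (fscale :: 'k::field \<Rightarrow> ('x \<Rightarrow> 'k) \<Rightarrow> _)"
  using module_fscale module_iff_vector_space by blast

lemma lin_ext_span_eq_zero:
  fixes R :: "('x \<Rightarrow> 'k::comm_ring_1) set"
  assumes R: "\<And>r. r \<in> R \<Longrightarrow> fin_supp r \<and> lin_ext g r = 0"
    and F: "F \<in> module.span fscale R"
  shows "fin_supp F \<and> lin_ext g F = 0"
proof -
  interpret module "fscale :: 'k \<Rightarrow> ('x \<Rightarrow> 'k) \<Rightarrow> _" by (rule module_fscale)
  show ?thesis using F
  proof (induct rule: span_induct)
    case base
    show ?case unfolding subspace_def
      by (auto simp: fin_supp_zero lin_ext_zero fin_supp_add lin_ext_add fin_supp_fscale lin_ext_fscale)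
  next
    case (step x) then show ?case using R by auto
  qed
qed

lemma sum_list_eq_if_fvec_diff_in_span:
  fixes R :: "('x \<Rightarrow> 'k::comm_ring_1) set"
  assumes R: "\<And>r. r \<in> R \<Longrightarrow> fin_supp r \<and> lin_ext g r = 0"
    and F: "fvec t - fvec u \<in> module.span fscale R"
  shows "sum_list (map g t) = sum_list (map g u)"
proof -
  have "lin_ext g (fvec t - fvec u) = 0" using lin_ext_span_eq_zero[OF R F] by auto
  then show ?thesis by (simp add: lin_ext_diff fin_supp_fvec lin_ext_fvec)
qed

lemma exists_functional_vanishing_on_span:
  assumes vs: "vector_space sc" and v: "v \<notin> module.span sc R"
  shows "\<exists>\<phi>. Vector_Spaces.linear sc ((*) :: 'k::field \<Rightarrow> 'k \<Rightarrow> 'k) \<phi> \<and>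
      (\<forall>r\<in>module.span sc R. \<phi> r = 0) \<and> \<phi> v = 1"
proof -
  interpret vector_space sc by (rule vs)
  interpret p: vector_space_pair sc "(*) :: 'k \<Rightarrow> 'k \<Rightarrow> 'k"
    by unfold_locales (auto simp: algebra_simps)
  obtain B where B: "B \<subseteq> span R" "independent B" "span R \<subseteq> span B"
    by (rule basis_exists[of "span R"])
  have span_B: "span B = span R"
    using B span_minimal[of B "span R"] by auto
  have v_B: "v \<notin> span B" using v span_B by simp
  obtain g where g: "Vector_Spaces.linear sc (*) g" "\<forall>x\<in>insert v B. g x = (if x = v then 1 else 0)"
    using p.linear_independent_extend[OF independent_insertI[OF v_B B(2)], of "\<lambda>x. if x = v then 1 else 0"]
    by blast
  have "\<forall>x\<in>B. g x = 0" using g(2) v_B span_base by fastforce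
  then have "\<forall>r\<in>span B. g r = 0" using p.linear_eq_0_on_span[OF g(1)] by blast
  then show ?thesis using g span_B by auto
qed

lemma exists_functional_nonzero:
  assumes vs: "vector_space sc" and v: "v \<noteq> 0"
  shows "\<exists>\<phi>. Vector_Spaces.linear sc ((*) :: 'k::field \<Rightarrow> 'k \<Rightarrow> 'k) \<phi> \<and> \<phi> v = 1"
proof -
  interpret vector_space sc by (rule vs)
  have "v \<notin> span {}" using v by simp
  then show ?thesis using exists_functional_vanishing_on_span[OF vs] by blast
qed

section \<open>Evaluating formal tensors by multilinear maps\<close>

definition bilinear :: "('k::field \<Rightarrow> 'a::ab_group_add \<Rightarrow> 'a) \<Rightarrow> ('k \<Rightarrow> 'b::ab_group_add \<Rightarrow> 'b) \<Rightarrow>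
   ('k \<Rightarrow> 'c::ab_group_add \<Rightarrow> 'c) \<Rightarrow> ('a \<Rightarrow> 'b \<Rightarrow> 'c) \<Rightarrow> bool" where
  "bilinear s1 s2 sc \<beta> \<longleftrightarrow> (\<forall>x x' y. \<beta> (x + x') y = \<beta> x y + \<beta> x' y) \<and>
     (\<forall>x y y'. \<beta> x (y + y') = \<beta> x y + \<beta> x y') \<and>
     (\<forall>c x y. \<beta> (s1 c x) y = sc c (\<beta> x y)) \<and> (\<forall>c x y. \<beta> x (s2 c y) = sc c (\<beta> x y))"

definition trilinear :: "('k::field \<Rightarrow> 'a::ab_group_add \<Rightarrow> 'a) \<Rightarrow> ('k \<Rightarrow> 'b::ab_group_add \<Rightarrow> 'b) \<Rightarrow>
   ('k \<Rightarrow> 'c::ab_group_add \<Rightarrow> 'c) \<Rightarrow> ('k \<Rightarrow> 'd::ab_group_add \<Rightarrow> 'd) \<Rightarrow> ('a \<Rightarrow> 'b \<Rightarrow> 'c \<Rightarrow> 'd) \<Rightarrow> bool" where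
  "trilinear s1 s2 s3 sc h \<longleftrightarrow> (\<forall>x x' y z. h (x + x') y z = h x y z + h x' y z) \<and>
     (\<forall>x y y' z. h x (y + y') z = h x y z + h x y' z) \<and>
     (\<forall>x y z z'. h x y (z + z') = h x y z + h x y z') \<and>
     (\<forall>c x y z. h (s1 c x) y z = sc c (h x y z)) \<and> (\<forall>c x y z. h x (s2 c y) z = sc c (h x y z)) \<and>
     (\<forall>c x y z. h x y (s3 c z) = sc c (h x y z))"

definition lsum :: "('a \<Rightarrow> 'b \<Rightarrow> 'c::monoid_add) \<Rightarrow> ('a \<times> 'b) list \<Rightarrow> 'c" where
  "lsum \<beta> t = sum_list (map (\<lambda>(x, y). \<beta> x y) t)"

definition lsum3 :: "('a \<Rightarrow> 'b \<Rightarrow> 'c \<Rightarrow> 'd::monoid_add) \<Rightarrow> ('a \<times> 'b \<times> 'c) list \<Rightarrow> 'd" where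
  "lsum3 h t = sum_list (map (\<lambda>(x, y, z). h x y z) t)"

lemma lsum_Nil[simp]: "lsum \<beta> [] = 0" by (simp add: lsum_def)
lemma lsum_Cons[simp]: "lsum \<beta> ((x, y) # t) = \<beta> x y + lsum \<beta> t" by (simp add: lsum_def)
lemma lsum_append[simp]: "lsum \<beta> (t @ u) = lsum \<beta> t + lsum \<beta> u" by (simp add: lsum_def)
lemma lsum3_Nil[simp]: "lsum3 h [] = 0" by (simp add: lsum3_def)
lemma lsum3_Cons[simp]: "lsum3 h ((x, y, z) # t) = h x y z + lsum3 h t" by (simp add: lsum3_def)
lemma lsum3_append[simp]: "lsum3 h (t @ u) = lsum3 h t + lsum3 h u" by (simp add: lsum3_def)

lemma teq2_eval_scalar:
  fixes \<beta> :: "'a::ab_group_add \<Rightarrow> 'b::ab_group_add \<Rightarrow> 'k::field"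
  assumes "teq2 s1 s2 t u" "bilinear s1 s2 (*) \<beta>"
  shows "lsum \<beta> t = lsum \<beta> u"
proof -
  have "fin_supp r \<and> lin_ext (\<lambda>(x, y). \<beta> x y) r = 0" if "r \<in> tens_rel2 s1 s2" for r
    using that assms(2) unfolding tens_rel2_def bilinear_def
    by (auto simp: fin_supp_diff fin_supp_dlt fin_supp_fscale lin_ext_diff lin_ext_dlt lin_ext_fscale)
  then show ?thesis
    using sum_list_eq_if_fvec_diff_in_span assms(1) unfolding teq2_def lsum_def by blast
qed

lemma teq3_eval_scalar:
  fixes h :: "'a::ab_group_add \<Rightarrow> 'b::ab_group_add \<Rightarrow> 'c::ab_group_add \<Rightarrow> 'k::field"
  assumes "teq3 s1 s2 s3 t u" "trilinear s1 s2 s3 (*) h"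
  shows "lsum3 h t = lsum3 h u"
proof -
  have "fin_supp r \<and> lin_ext (\<lambda>(x, y, z). h x y z) r = 0" if "r \<in> tens_rel3 s1 s2 s3" for r
    using that assms(2) unfolding tens_rel3_def trilinear_def
    by (auto simp: fin_supp_diff fin_supp_dlt fin_supp_fscale lin_ext_diff lin_ext_dlt lin_ext_fscale)
  then show ?thesis
    using sum_list_eq_if_fvec_diff_in_span assms(1) unfolding teq3_def lsum3_def by blast
qed

lemma linear_lsum:
  assumes "Vector_Spaces.linear s1 s2 f"
  shows "f (lsum \<beta> t) = lsum (\<lambda>x y. f (\<beta> x y)) t"
proof -
  interpret Vector_Spaces.linear s1 s2 f by (rule assms)
  show ?thesis by (induct t) (auto simp: add lsum_def)
qed

lemma linear_lsum3:
  assumes "Vector_Spaces.linear s1 s2 f"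
  shows "f (lsum3 h t) = lsum3 (\<lambda>x y z. f (h x y z)) t"
proof -
  interpret Vector_Spaces.linear s1 s2 f by (rule assms)
  show ?thesis by (induct t) (auto simp: add lsum3_def)
qed

lemma bilinear_compose:
  assumes "bilinear s1 s2 sc \<beta>" "Vector_Spaces.linear sc sd f"
  shows "bilinear s1 s2 sd (\<lambda>x y. f (\<beta> x y))"
proof -
  interpret Vector_Spaces.linear sc sd f by (rule assms)
  show ?thesis using assms(1) unfolding bilinear_def by (auto simp: add scale)
qed

lemma trilinear_compose:
  assumes "trilinear s1 s2 s3 sc h" "Vector_Spaces.linear sc sd f"
  shows "trilinear s1 s2 s3 sd (\<lambda>x y z. f (h x y z))"
proof -
  interpret Vector_Spaces.linear sc sd f by (rule assms)
  show ?thesis using assms(1) unfolding trilinear_def by (auto simp: add scale)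
qed

lemma teq2_eval:
  assumes vs: "vector_space sc" and "teq2 s1 s2 t u" and b: "bilinear s1 s2 sc \<beta>"
  shows "lsum \<beta> t = lsum \<beta> u"
proof (rule ccontr)
  assume "lsum \<beta> t \<noteq> lsum \<beta> u"
  then obtain \<phi> where \<phi>: "Vector_Spaces.linear sc (*) \<phi>" "\<phi> (lsum \<beta> t - lsum \<beta> u) = 1"
    using exists_functional_nonzero[OF vs, of "lsum \<beta> t - lsum \<beta> u"] by auto
  interpret Vector_Spaces.linear sc "(*)" \<phi> by (rule \<phi>(1))
  have "lsum (\<lambda>x y. \<phi> (\<beta> x y)) t = lsum (\<lambda>x y. \<phi> (\<beta> x y)) u"
    by (rule teq2_eval_scalar[OF assms(2) bilinear_compose[OF b \<phi>(1)]])
  then have "\<phi> (lsum \<beta> t) = \<phi> (lsum \<beta> u)" by (simp add: linear_lsum[OF \<phi>(1)])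
  then show False using \<phi>(2) by (simp add: diff)
qed

lemma teq3_eval:
  assumes vs: "vector_space sc" and "teq3 s1 s2 s3 t u" and b: "trilinear s1 s2 s3 sc h"
  shows "lsum3 h t = lsum3 h u"
proof (rule ccontr)
  assume "lsum3 h t \<noteq> lsum3 h u"
  then obtain \<phi> where \<phi>: "Vector_Spaces.linear sc (*) \<phi>" "\<phi> (lsum3 h t - lsum3 h u) = 1"
    using exists_functional_nonzero[OF vs, of "lsum3 h t - lsum3 h u"] by auto
  interpret Vector_Spaces.linear sc "(*)" \<phi> by (rule \<phi>(1))
  have "lsum3 (\<lambda>x y z. \<phi> (h x y z)) t = lsum3 (\<lambda>x y z. \<phi> (h x y z)) u"
    by (rule teq3_eval_scalar[OF assms(2) trilinear_compose[OF b \<phi>(1)]])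
  then have "\<phi> (lsum3 h t) = \<phi> (lsum3 h u)" by (simp add: linear_lsum3[OF \<phi>(1)])
  then show False using \<phi>(2) by (simp add: diff)
qed

text \<open>
  A functional separating \<open>fvec t - fvec u\<close> from the span of the relations restricts to a
  bilinear form on pure tensors.
\<close>

lemma teq2I:
  fixes t u :: "('a::ab_group_add \<times> 'b::ab_group_add) list"
    and s1 :: "'k::field \<Rightarrow> 'a \<Rightarrow> 'a"
  assumes H: "\<And>\<beta> :: 'a \<Rightarrow> 'b \<Rightarrow> 'k. bilinear s1 s2 (*) \<beta> \<Longrightarrow> lsum \<beta> t = lsum \<beta> u"
  shows "teq2 s1 s2 t u"
proof (rule ccontr)
  assume "\<not> teq2 s1 s2 t u"
  then have nd: "fvec t - fvec u \<notin> module.span fscale (tens_rel2 s1 s2)" by (simp add: teq2_def)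
  obtain \<phi> :: "('a \<times> 'b \<Rightarrow> 'k) \<Rightarrow> 'k" where \<phi>: "Vector_Spaces.linear fscale (*) \<phi>"
    "\<forall>r\<in>module.span fscale (tens_rel2 s1 s2). \<phi> r = 0" "\<phi> (fvec t - fvec u) = 1"
    using exists_functional_vanishing_on_span[OF vector_space_fscale nd] by blast
  interpret l: Vector_Spaces.linear fscale "(*)" \<phi> by (rule \<phi>(1))
  have rel: "\<phi> (dlt (x + x', y) - dlt (x, y) - dlt (x', y)) = 0"
    "\<phi> (dlt (x, y + y') - dlt (x, y) - dlt (x, y')) = 0"
    "\<phi> (dlt (s1 c x, y) - fscale c (dlt (x, y))) = 0"
    "\<phi> (dlt (x, s2 c y) - fscale c (dlt (x, y))) = 0" for x x' y y' c
    by (rule \<phi>(2)[rule_format, OF module.span_base[OF module_fscale]], unfold tens_rel2_def, blast)+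
  define \<beta> where "\<beta> x y = \<phi> (dlt (x, y))" for x y
  have "bilinear s1 s2 (*) \<beta>"
    using rel unfolding bilinear_def \<beta>_def by (simp add: l.diff l.scale diff_eq_eq)
  then have eq: "lsum \<beta> t = lsum \<beta> u" by (rule H)
  have fv: "\<phi> (fvec v) = lsum \<beta> v" for v :: "('a \<times> 'b) list"
  proof (induct v)
    case Nil show ?case by (subst fvec_Nil) (simp only: l.zero lsum_Nil)
  next
    case (Cons p v) then show ?case
      by (cases p) (simp only: fvec_Cons l.add lsum_Cons \<beta>_def)
  qed
  have "\<phi> (fvec t - fvec u) = 0" using eq by (simp add: l.diff fv)
  then show False using \<phi>(3) by simp
qed

lemma teq2_iff:
  fixes t u :: "('a::ab_group_add \<times> 'b::ab_group_add) list"
    and s1 :: "'k::field \<Rightarrow> 'a \<Rightarrow> 'a"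
  shows "teq2 s1 s2 t u \<longleftrightarrow> (\<forall>\<beta> :: 'a \<Rightarrow> 'b \<Rightarrow> 'k. bilinear s1 s2 (*) \<beta> \<longrightarrow> lsum \<beta> t = lsum \<beta> u)"
  using teq2_eval_scalar[of s1 s2 t u] teq2I[of s1 s2 t u] by blast

lemma teq2_sym: "teq2 s1 s2 t u \<Longrightarrow> teq2 s1 s2 u t"
  by (simp add: teq2_iff)
lemma teq2_trans: "teq2 s1 s2 t u \<Longrightarrow> teq2 s1 s2 u v \<Longrightarrow> teq2 s1 s2 t v"
  by (simp add: teq2_iff)

lemma lsum_add_fun: "lsum (\<lambda>x y. f x y + g x y) t = lsum f t + (lsum g t :: 'c::comm_monoid_add)"
  by (induct t) (auto simp: algebra_simps)
lemma lsum_zero_fun[simp]: "lsum (\<lambda>x y. 0) t = (0 :: 'c::monoid_add)"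
  by (induct t) auto
lemma lsum_map: "lsum \<beta> (map (\<lambda>(x, y). (f x y, g x y)) t) = lsum (\<lambda>x y. \<beta> (f x y) (g x y)) t"
  by (induct t) auto
lemma lsum_cong: "(\<And>x y. (x, y) \<in> set t \<Longrightarrow> f x y = g x y) \<Longrightarrow> lsum f t = lsum g t"
  by (induct t) auto
lemma lsum_sum: "lsum (\<lambda>p q. \<Sum>s\<in>A. f s p q) t = (\<Sum>s\<in>A. lsum (f s) t)"
  by (induct t) (auto simp: sum.distrib)

lemma lsum_concat: "lsum \<beta> (concat (map (\<lambda>(x, y). G x y) t)) = lsum (\<lambda>x y. lsum \<beta> (G x y)) t"
  by (induct t) auto
lemma lsum_swap: "lsum (\<lambda>x y. lsum (\<lambda>p q. f x y p q) u) t = (lsum (\<lambda>p q. lsum (\<lambda>x y. f x y p q) t) u :: 'c::comm_monoid_add)"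
  by (induct t) (auto simp: lsum_add_fun)
lemma lsum_mult_left: "c * lsum f t = lsum (\<lambda>x y. c * f x y) t" for c :: "'a::ring"
  by (induct t) (auto simp: algebra_simps)
lemma lsum_mult_right: "lsum f t * c = lsum (\<lambda>x y. f x y * c) t" for c :: "'a::ring"
  by (induct t) (auto simp: algebra_simps)
lemma lsum_tmul: "lsum \<beta> (tmul t u) = lsum (\<lambda>a b. lsum (\<lambda>c d. \<beta> (a * c) (b * d)) u) t"
proof -
  have "lsum \<beta> (map (\<lambda>(x', y'). (a * x', b * y')) u) = lsum (\<lambda>c d. \<beta> (a * c) (b * d)) u" for a b
    by (induct u) auto
  then show ?thesis unfolding tmul_def
    by (induct t) (auto simp: lsum_def)
qed

lemma lsum3_left_apply: "lsum3 h (left_apply D t) = lsum (\<lambda>u v. lsum (\<lambda>p q. h p q v) (D u)) t"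
proof -
  have "lsum3 h (map (\<lambda>(u, v). (u, v, z)) l) = lsum (\<lambda>p q. h p q z) l" for l z
    by (induct l) auto
  then show ?thesis unfolding left_apply_def by (induct t) (auto simp: lsum3_def lsum_def)
qed

lemma lsum3_right_apply: "lsum3 h (right_apply D t) = lsum (\<lambda>u v. lsum (\<lambda>p q. h u p q) (D v)) t"
proof -
  have "lsum3 h (map (\<lambda>(u, v). (x, u, v)) l) = lsum (\<lambda>p q. h x p q) l" for l x
    by (induct l) auto
  then show ?thesis unfolding right_apply_def by (induct t) (auto simp: lsum3_def lsum_def)
qed

definition scale_left_tens :: "('k \<Rightarrow> 'a \<Rightarrow> 'a) \<Rightarrow> 'k \<Rightarrow> ('a \<times> 'b) list \<Rightarrow> ('a \<times> 'b) list" where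
  "scale_left_tens s c t = map (\<lambda>(u, v). (s c u, v)) t"

lemma bilinearD:
  assumes "bilinear s1 s2 sc \<beta>"
  shows "\<beta> (x + x') y = \<beta> x y + \<beta> x' y" "\<beta> x (y + y') = \<beta> x y + \<beta> x y'"
    "\<beta> (s1 c x) y = sc c (\<beta> x y)" "\<beta> x (s2 c y) = sc c (\<beta> x y)"
  using assms unfolding bilinear_def by auto

lemma lsum_scale_left_tens:
  assumes "vector_space sc" "bilinear s1 s2 sc \<beta>"
  shows "lsum \<beta> (scale_left_tens s1 c t) = sc c (lsum \<beta> t)"
proof -
  interpret vector_space sc by (rule assms(1))
  show ?thesis unfolding scale_left_tens_def
    by (induct t) (auto simp: bilinearD[OF assms(2)] scale_right_distrib)
qed

lemma vector_space_field: "vector_space ((*) :: 'k::field \<Rightarrow> 'k \<Rightarrow> 'k)"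
  by unfold_locales (auto simp: algebra_simps)

lemma lsum_scale_fun:
  assumes "vector_space sc"
  shows "lsum (\<lambda>x y. sc c (f x y)) t = sc c (lsum f t)"
proof -
  interpret vector_space sc by (rule assms)
  show ?thesis by (induct t) (auto simp: scale_right_distrib)
qed

lemma bilinear_zero:
  assumes "vector_space sc" "bilinear s1 s2 sc f"
  shows "f x 0 = 0" "f 0 y = 0"
proof -
  interpret vector_space sc by (rule assms(1))
  have "f x 0 = f x 0 + f x 0" using bilinearD(2)[OF assms(2), of x 0 0] by simp
  then show "f x 0 = 0" by simp
  have "f 0 y = f 0 y + f 0 y" using bilinearD(1)[OF assms(2), of 0 0 y] by simp
  then show "f 0 y = 0" by simp
qed

lemma bilinear_lsum_right:
  assumes "vector_space sc" "bilinear s1 s2 sc f"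
  shows "f x (lsum g t) = lsum (\<lambda>a b. f x (g a b)) t"
  by (induct t) (auto simp: bilinear_zero[OF assms] bilinearD[OF assms(2)])

lemma bilinear_lsum_left:
  assumes "vector_space sc" "bilinear s1 s2 sc f"
  shows "f (lsum g t) y = lsum (\<lambda>a b. f (g a b) y) t"
  by (induct t) (auto simp: bilinear_zero[OF assms] bilinearD[OF assms(2)])

lemma teq2_append: "teq2 s1 s2 t t' \<Longrightarrow> teq2 s1 s2 u u' \<Longrightarrow> teq2 s1 s2 (t @ u) (t' @ u')"
  by (simp add: teq2_iff)

lemma teq2_scale_left_tens: "teq2 s1 s2 t t' \<Longrightarrow> teq2 s1 s2 (scale_left_tens s1 c t) (scale_left_tens s1 c t')"
  by (simp add: teq2_iff lsum_scale_left_tens[OF vector_space_field])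

lemmas teq2_trans_calc[trans] = teq2_trans

locale hopf_alg =
  fixes sK :: "'k::field \<Rightarrow> 'a::ring_1 \<Rightarrow> 'a" and \<Delta> :: "'a \<Rightarrow> ('a \<times> 'a) list"
    and \<epsilon> :: "'a \<Rightarrow> 'k" and S :: "'a \<Rightarrow> 'a"
  assumes hopf: "hopf_algebra sK \<Delta> \<epsilon> S"
begin

lemma k_algebra_K: "k_algebra sK" using hopf by (simp add: hopf_algebra_def)
lemma vector_space_K: "vector_space sK" using k_algebra_K by (simp add: k_algebra_def)

sublocale vector_space sK by (rule vector_space_K)

lemma sK_mult_left[simp]: "sK c x * y = sK c (x * y)"
  using k_algebra_K by (simp add: k_algebra_def)
lemma sK_mult_right[simp]: "x * sK c y = sK c (x * y)"
  using k_algebra_K by (simp add: k_algebra_def)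

lemma Delta_add: "teq2 sK sK (\<Delta> (x + y)) (\<Delta> x @ \<Delta> y)" using hopf by (simp add: hopf_algebra_def)
lemma Delta_scale: "teq2 sK sK (\<Delta> (sK c x)) (scale_left_tens sK c (\<Delta> x))" using hopf by (simp add: hopf_algebra_def scale_left_tens_def)
lemma Delta_mult: "teq2 sK sK (\<Delta> (x * y)) (tmul (\<Delta> x) (\<Delta> y))" using hopf by (simp add: hopf_algebra_def)
lemma Delta_one: "teq2 sK sK (\<Delta> 1) [(1, 1)]" using hopf by (simp add: hopf_algebra_def)
lemma coassoc: "teq3 sK sK sK (left_apply \<Delta> (\<Delta> x)) (right_apply \<Delta> (\<Delta> x))"
  using hopf by (simp add: hopf_algebra_def)
lemma linear_eps: "Vector_Spaces.linear sK (*) \<epsilon>" using hopf by (simp add: hopf_algebra_def)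
lemma eps_mult[simp]: "\<epsilon> (x * y) = \<epsilon> x * \<epsilon> y" using hopf by (simp add: hopf_algebra_def)
lemma eps_one[simp]: "\<epsilon> 1 = 1" using hopf by (simp add: hopf_algebra_def)
lemma counit_left: "lsum (\<lambda>u v. sK (\<epsilon> u) v) (\<Delta> x) = x" using hopf by (simp add: hopf_algebra_def lsum_def)
lemma counit_right: "lsum (\<lambda>u v. sK (\<epsilon> v) u) (\<Delta> x) = x" using hopf by (simp add: hopf_algebra_def lsum_def)
lemma linear_S: "Vector_Spaces.linear sK sK S" using hopf by (simp add: hopf_algebra_def)
lemma antipode_left: "lsum (\<lambda>u v. S u * v) (\<Delta> x) = sK (\<epsilon> x) 1" using hopf by (simp add: hopf_algebra_def lsum_def)
lemma antipode_right: "lsum (\<lambda>u v. u * S v) (\<Delta> x) = sK (\<epsilon> x) 1" using hopf by (simp add: hopf_algebra_def lsum_def)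

lemma S_add[simp]: "S (x + y) = S x + S y" using linear_S by (simp add: Vector_Spaces.linear_iff)
lemma S_scale[simp]: "S (sK c x) = sK c (S x)" using linear_S by (simp add: Vector_Spaces.linear_iff)
lemma S_zero[simp]: "S 0 = 0" by (metis add_cancel_right_right S_add)
lemma eps_add[simp]: "\<epsilon> (x + y) = \<epsilon> x + \<epsilon> y" using linear_eps by (simp add: Vector_Spaces.linear_iff)
lemma eps_scale[simp]: "\<epsilon> (sK c x) = c * \<epsilon> x" using linear_eps by (simp add: Vector_Spaces.linear_iff)
lemma eps_zero[simp]: "\<epsilon> 0 = 0" by (metis add_cancel_right_right eps_add)

lemma lsum_scale_K: "lsum (\<lambda>x y. sK c (f x y)) t = sK c (lsum f t)"
  by (rule lsum_scale_fun[OF vector_space_K])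
lemma lsum_scale_k: "lsum (\<lambda>x y. c * f x y) t = c * (lsum f t :: 'k)"
  by (rule lsum_scale_fun[OF vector_space_field])

abbreviation "bil_KK_K \<equiv> bilinear sK sK sK"
abbreviation "bil_KK_k \<equiv> bilinear sK sK ((*) :: 'k \<Rightarrow> 'k \<Rightarrow> 'k)"

lemma lsum_Delta_add:
  assumes "vector_space sc" "bilinear sK sK sc \<beta>"
  shows "lsum \<beta> (\<Delta> (x + y)) = lsum \<beta> (\<Delta> x) + lsum \<beta> (\<Delta> y)"
  using teq2_eval[OF assms(1) Delta_add assms(2)] by simp
lemma lsum_Delta_scale:
  assumes "vector_space sc" "bilinear sK sK sc \<beta>"
  shows "lsum \<beta> (\<Delta> (sK c x)) = sc c (lsum \<beta> (\<Delta> x))"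
  using teq2_eval[OF assms(1) Delta_scale assms(2)] lsum_scale_left_tens[OF assms] by simp
lemma lsum_Delta_mult:
  assumes "vector_space sc" "bilinear sK sK sc \<beta>"
  shows "lsum \<beta> (\<Delta> (x * y)) = lsum (\<lambda>a b. lsum (\<lambda>c d. \<beta> (a * c) (b * d)) (\<Delta> y)) (\<Delta> x)"
  using teq2_eval[OF assms(1) Delta_mult assms(2)] lsum_tmul by metis
lemma lsum_Delta_one:
  assumes "vector_space sc" "bilinear sK sK sc \<beta>"
  shows "lsum \<beta> (\<Delta> 1) = \<beta> 1 1"
  using teq2_eval[OF assms(1) Delta_one assms(2)] by simp
lemma lsum_coassoc:
  assumes "vector_space sc" "trilinear sK sK sK sc h"
  shows "lsum (\<lambda>u v. lsum (\<lambda>p q. h p q v) (\<Delta> u)) (\<Delta> x) = lsum (\<lambda>u v. lsum (\<lambda>p q. h u p q) (\<Delta> v)) (\<Delta> x)"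
  using teq3_eval[OF assms(1) coassoc assms(2)] lsum3_left_apply lsum3_right_apply by metis

lemmas lsum_Delta_add_k = lsum_Delta_add[OF vector_space_field]
  and lsum_Delta_scale_k = lsum_Delta_scale[OF vector_space_field]
  and lsum_Delta_mult_K = lsum_Delta_mult[OF vector_space_K]
  and lsum_Delta_mult_k = lsum_Delta_mult[OF vector_space_field]
  and lsum_Delta_one_K = lsum_Delta_one[OF vector_space_K]
  and lsum_Delta_one_k = lsum_Delta_one[OF vector_space_field]
  and lsum_coassoc_K = lsum_coassoc[OF vector_space_K]
  and lsum_coassoc_k = lsum_coassoc[OF vector_space_field]

section \<open>The antipode is antimultiplicative\<close>

text \<open>
  In the convolution algebra of bilinear maps \<open>K \<times> K \<rightarrow> K\<close>, \<open>(x, y) \<mapsto> S (x y)\<close> is a left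
  and \<open>(x, y) \<mapsto> S y S x\<close> a right inverse of the multiplication, so the two agree.
\<close>

definition conv :: "('a \<Rightarrow> 'a \<Rightarrow> 'a) \<Rightarrow> ('a \<Rightarrow> 'a \<Rightarrow> 'a) \<Rightarrow> 'a \<Rightarrow> 'a \<Rightarrow> 'a" where
  "conv f g x y = lsum (\<lambda>x1 x2. lsum (\<lambda>y1 y2. f x1 y1 * g x2 y2) (\<Delta> y)) (\<Delta> x)"

lemma conv_assoc:
  assumes f: "bil_KK_K f" and g: "bil_KK_K g" and h: "bil_KK_K h"
  shows "conv (conv f g) h x y = conv f (conv g h) x y"
proof -
  define Hx where "Hx p q r = lsum (\<lambda>y1 y2. lsum (\<lambda>y11 y12. f p y11 * g q y12 * h r y2) (\<Delta> y1)) (\<Delta> y)" for p q r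
  define G where "G u p q a b c = f u a * g p b * h q c" for u p q a b c
  have trG: "trilinear sK sK sK sK (G u p q)" for u p q
    unfolding trilinear_def G_def by (simp add: bilinearD[OF f] bilinearD[OF g] bilinearD[OF h] distrib_left distrib_right)
  have trH: "trilinear sK sK sK sK Hx"
    unfolding trilinear_def Hx_def
    by (simp add: bilinearD[OF f] bilinearD[OF g] bilinearD[OF h] distrib_left distrib_right lsum_add_fun lsum_scale_K)
  have HxG: "Hx u p q = lsum (\<lambda>y1 y2. lsum (\<lambda>a b. G u p q y1 a b) (\<Delta> y2)) (\<Delta> y)" for u p q
    unfolding Hx_def using lsum_coassoc_K[OF trG[of u p q], of y] by (simp add: G_def)
  have "conv (conv f g) h x y = lsum (\<lambda>x1 x2. lsum (\<lambda>x11 x12. Hx x11 x12 x2) (\<Delta> x1)) (\<Delta> x)"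
    unfolding conv_def Hx_def
    apply (rule lsum_cong)
    apply (simp add: lsum_mult_right)
    apply (rule lsum_swap)
    done
  also have "\<dots> = lsum (\<lambda>u v. lsum (\<lambda>p q. Hx u p q) (\<Delta> v)) (\<Delta> x)"
    by (rule lsum_coassoc_K[OF trH])
  also have "\<dots> = conv f (conv g h) x y"
    unfolding conv_def HxG G_def
    apply (rule lsum_cong)
    apply (simp add: lsum_mult_left mult.assoc)
    apply (rule lsum_swap)
    done
  finally show ?thesis .
qed

definition conv_unit :: "'a \<Rightarrow> 'a \<Rightarrow> 'a" where "conv_unit x y = sK (\<epsilon> x * \<epsilon> y) 1"

lemma conv_unit_right:
  assumes f: "bil_KK_K f"
  shows "conv f conv_unit x y = f x y"
proof -
  have "conv f conv_unit x y = lsum (\<lambda>x1 x2. sK (\<epsilon> x2) (lsum (\<lambda>y1 y2. sK (\<epsilon> y2) (f x1 y1)) (\<Delta> y))) (\<Delta> x)"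
    unfolding conv_def conv_unit_def by (simp add: lsum_scale_K[symmetric])
  also have "\<dots> = lsum (\<lambda>x1 x2. sK (\<epsilon> x2) (f x1 y)) (\<Delta> x)"
  proof -
    have "f a (lsum (\<lambda>y1 y2. sK (\<epsilon> y2) y1) (\<Delta> y)) = lsum (\<lambda>y1 y2. sK (\<epsilon> y2) (f a y1)) (\<Delta> y)" for a
      by (simp add: bilinear_lsum_right[OF vector_space_K f] bilinearD[OF f])
    then show ?thesis by (simp add: counit_right)
  qed
  also have "\<dots> = f x y"
  proof -
    have "f (lsum (\<lambda>y1 y2. sK (\<epsilon> y2) y1) (\<Delta> x)) y = lsum (\<lambda>y1 y2. sK (\<epsilon> y2) (f y1 y)) (\<Delta> x)"
      by (simp add: bilinear_lsum_left[OF vector_space_K f] bilinearD[OF f])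
    then show ?thesis by (simp add: counit_right)
  qed
  finally show ?thesis .
qed

lemma conv_unit_left:
  assumes f: "bil_KK_K f"
  shows "conv conv_unit f x y = f x y"
proof -
  have "conv conv_unit f x y = lsum (\<lambda>x1 x2. sK (\<epsilon> x1) (lsum (\<lambda>y1 y2. sK (\<epsilon> y1) (f x2 y2)) (\<Delta> y))) (\<Delta> x)"
    unfolding conv_def conv_unit_def by (simp add: lsum_scale_K[symmetric])
  also have "\<dots> = lsum (\<lambda>x1 x2. sK (\<epsilon> x1) (f x2 y)) (\<Delta> x)"
  proof -
    have "f a (lsum (\<lambda>y1 y2. sK (\<epsilon> y1) y2) (\<Delta> y)) = lsum (\<lambda>y1 y2. sK (\<epsilon> y1) (f a y2)) (\<Delta> y)" for a
      by (simp add: bilinear_lsum_right[OF vector_space_K f] bilinearD[OF f])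
    then show ?thesis by (simp add: counit_left)
  qed
  also have "\<dots> = f x y"
  proof -
    have "f (lsum (\<lambda>y1 y2. sK (\<epsilon> y1) y2) (\<Delta> x)) y = lsum (\<lambda>y1 y2. sK (\<epsilon> y1) (f y2 y)) (\<Delta> x)"
      by (simp add: bilinear_lsum_left[OF vector_space_K f] bilinearD[OF f])
    then show ?thesis by (simp add: counit_left)
  qed
  finally show ?thesis .
qed

lemma S_one[simp]: "S 1 = 1"
proof -
  have b: "bil_KK_K (\<lambda>u v. S u * v)" unfolding bilinear_def by (simp add: algebra_simps)
  show ?thesis using antipode_left[of 1] lsum_Delta_one_K[OF b] by simp
qed

lemma S_mult: "S (x * y) = S y * S x"
proof -
  define A where "A a b = S (a * b)" for a b
  define m where "m a b = (a * b :: 'a)" for a b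
  define B where "B a b = S b * S a" for a b
  have bA: "bil_KK_K A" unfolding bilinear_def A_def by (simp add: algebra_simps)
  have bm: "bil_KK_K m" unfolding bilinear_def m_def by (simp add: algebra_simps)
  have bB: "bil_KK_K B" unfolding bilinear_def B_def by (simp add: algebra_simps)
  have bS: "bil_KK_K (\<lambda>u v. S u * v)" unfolding bilinear_def by (simp add: algebra_simps)
  have Am: "conv A m = conv_unit"
  proof (intro ext)
    fix a b
    show "conv A m a b = conv_unit a b"
      unfolding conv_def A_def m_def conv_unit_def
      using lsum_Delta_mult_K[OF bS, of a b] antipode_left[of "a * b"] by (simp add: mult.assoc)
  qed
  have mB: "conv m B = conv_unit"
  proof (intro ext)
    fix a b
    have "conv m B a b = lsum (\<lambda>x1 x2. x1 * lsum (\<lambda>y1 y2. y1 * S y2) (\<Delta> b) * S x2) (\<Delta> a)"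
      unfolding conv_def m_def B_def by (simp add: lsum_mult_left lsum_mult_right mult.assoc)
    also have "\<dots> = sK (\<epsilon> b) (lsum (\<lambda>x1 x2. x1 * S x2) (\<Delta> a))"
      by (simp add: antipode_right lsum_scale_K)
    also have "\<dots> = conv_unit a b" by (simp add: antipode_right conv_unit_def mult.commute)
    finally show "conv m B a b = conv_unit a b" .
  qed
  have "A x y = conv A conv_unit x y" by (rule conv_unit_right[OF bA, symmetric])
  also have "\<dots> = conv A (conv m B) x y" by (simp add: mB)
  also have "\<dots> = conv (conv A m) B x y" by (rule conv_assoc[OF bA bm bB, symmetric])
  also have "\<dots> = B x y" by (simp add: Am conv_unit_left[OF bB])
  finally show ?thesis by (simp add: A_def B_def)
qed

lemma eps_S[simp]: "\<epsilon> (S x) = \<epsilon> x"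
proof -
  have "\<epsilon> (S x) = \<epsilon> (S (lsum (\<lambda>u v. sK (\<epsilon> v) u) (\<Delta> x)))" by (simp add: counit_right)
  also have "\<dots> = lsum (\<lambda>u v. \<epsilon> (S u) * \<epsilon> v) (\<Delta> x)"
    by (simp add: linear_lsum[OF linear_S] linear_lsum[OF linear_eps] mult.commute)
  also have "\<dots> = \<epsilon> (lsum (\<lambda>u v. S u * v) (\<Delta> x))"
    by (simp add: linear_lsum[OF linear_eps])
  also have "\<dots> = \<epsilon> x" by (simp add: antipode_left)
  finally show ?thesis .
qed

section \<open>The antipode is anticomultiplicative\<close>

text \<open>
  Dually, in the convolution algebra of maps \<open>K \<rightarrow> K \<otimes> K\<close>, \<open>\<Delta> \<circ> S\<close> is a left and
  \<open>(S \<otimes> S) \<circ> flip \<circ> \<Delta>\<close> a right inverse of \<open>\<Delta>\<close>.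
\<close>

definition lin_form :: "('a \<Rightarrow> 'k) \<Rightarrow> bool" where
  "lin_form \<phi> \<longleftrightarrow> (\<forall>x y. \<phi> (x + y) = \<phi> x + \<phi> y) \<and> (\<forall>c x. \<phi> (sK c x) = c * \<phi> x)"

lemma lin_formD: "lin_form \<phi> \<Longrightarrow> \<phi> (x + y) = \<phi> x + \<phi> y" "lin_form \<phi> \<Longrightarrow> \<phi> (sK c x) = c * \<phi> x"
  unfolding lin_form_def by auto

lemma trilinear_k_iff: "trilinear sK sK sK (*) h \<longleftrightarrow> (\<forall>y z. lin_form (\<lambda>x. h x y z)) \<and> (\<forall>x z. lin_form (\<lambda>y. h x y z)) \<and> (\<forall>x y. lin_form (h x y))"
  unfolding trilinear_def lin_form_def by auto

lemma lin_form_lsum: "(\<And>a b. lin_form (\<lambda>x. f x a b)) \<Longrightarrow> lin_form (\<lambda>x. lsum (f x) t)"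
  unfolding lin_form_def by (induct t) (auto simp: algebra_simps)

lemma lin_form_lsum_Delta: "bil_KK_k \<gamma> \<Longrightarrow> lin_form (\<lambda>x. lsum \<gamma> (\<Delta> x))"
  unfolding lin_form_def by (simp add: lsum_Delta_add_k lsum_Delta_scale_k)

lemma lin_form_zero: "lin_form \<phi> \<Longrightarrow> \<phi> 0 = 0"
  using lin_formD(2)[of \<phi> 0 0] by simp

lemma lin_form_lsum_app: "lin_form \<phi> \<Longrightarrow> \<phi> (lsum f t) = lsum (\<lambda>a b. \<phi> (f a b)) t"
  by (induct t) (auto simp: lin_form_zero lin_formD)

definition tens_linear :: "('a \<Rightarrow> ('a \<times> 'a) list) \<Rightarrow> bool" where
  "tens_linear F \<longleftrightarrow> (\<forall>\<beta>. bil_KK_k \<beta> \<longrightarrow> lin_form (\<lambda>x. lsum \<beta> (F x)))"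

lemma bilinear_mult_left_pair: "bil_KK_k \<beta> \<Longrightarrow> bil_KK_k (\<lambda>c d. \<beta> (a * c) (b * d))"
  unfolding bilinear_def by (simp add: distrib_left)

lemma bilinear_mult_right_pair: "bil_KK_k \<beta> \<Longrightarrow> bil_KK_k (\<lambda>a b. \<beta> (a * c) (b * d))"
  unfolding bilinear_def by (simp add: distrib_right)

lemma bilinear_lsum_mult_left_pair: "bil_KK_k \<beta> \<Longrightarrow> bil_KK_k (\<lambda>a b. lsum (\<lambda>c d. \<beta> (a * c) (b * d)) w)"
  unfolding bilinear_def by (simp add: distrib_right lsum_add_fun lsum_scale_k)

definition tens_conv :: "('a \<Rightarrow> ('a \<times> 'a) list) \<Rightarrow> ('a \<Rightarrow> ('a \<times> 'a) list) \<Rightarrow> 'a \<Rightarrow> ('a \<times> 'a) list" where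
  "tens_conv F G x = concat (map (\<lambda>(u, v). tmul (F u) (G v)) (\<Delta> x))"

lemma lsum_tens_conv: "lsum \<beta> (tens_conv F G x) =
   lsum (\<lambda>u v. lsum (\<lambda>a b. lsum (\<lambda>c d. \<beta> (a * c) (b * d)) (G v)) (F u)) (\<Delta> x)"
  unfolding tens_conv_def by (simp add: lsum_concat lsum_tmul)

lemma teq2_KI: "(\<And>\<beta>. bil_KK_k \<beta> \<Longrightarrow> lsum \<beta> t = lsum \<beta> u) \<Longrightarrow> teq2 sK sK t u"
  by (rule teq2I) auto

lemma teq2_K_eval: "teq2 sK sK t u \<Longrightarrow> bil_KK_k \<beta> \<Longrightarrow> lsum \<beta> t = lsum \<beta> u"
  by (rule teq2_eval_scalar)

lemma tens_conv_assoc: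
  assumes F: "tens_linear F" and G: "tens_linear G" and Hh: "tens_linear Hh"
  shows "teq2 sK sK (tens_conv (tens_conv F G) Hh x) (tens_conv F (tens_conv G Hh) x)"
proof (rule teq2_KI)
  fix \<beta> assume b: "bil_KK_k \<beta>"
  define h where "h p q v = lsum (\<lambda>a1 b1. lsum (\<lambda>a2 b2. lsum (\<lambda>c d. \<beta> (a1 * (a2 * c)) (b1 * (b2 * d))) (Hh v)) (G q)) (F p)" for p q v
  have b3: "bil_KK_k (\<lambda>c d. \<beta> (a1 * (a2 * c)) (b1 * (b2 * d)))" for a1 a2 b1 b2
    using bilinear_mult_left_pair[OF bilinear_mult_left_pair[OF b, of a1 b1], of a2 b2] by simp
  have b2: "bil_KK_k (\<lambda>a2 b2. lsum (\<lambda>c d. \<beta> (a1 * (a2 * c)) (b1 * (b2 * d))) w)" for a1 b1 w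
    using bilinear_lsum_mult_left_pair[OF bilinear_mult_left_pair[OF b, of a1 b1], of w] by (simp add: mult.assoc)
  have b1: "bil_KK_k (\<lambda>a1 b1. lsum (\<lambda>a2 b2. lsum (\<lambda>c d. \<beta> (a1 * (a2 * c)) (b1 * (b2 * d))) (Hh v)) (G q))" for v q
    unfolding bilinear_def by (simp add: distrib_right lsum_add_fun lsum_scale_k bilinearD[OF b])
  have tr: "trilinear sK sK sK (*) h"
    unfolding trilinear_k_iff
  proof (intro conjI allI)
    fix q v show "lin_form (\<lambda>p. h p q v)" unfolding h_def using F b1 unfolding tens_linear_def by blast
  next
    fix p v show "lin_form (\<lambda>q. h p q v)" unfolding h_def
      by (rule lin_form_lsum) (use G b2 in \<open>auto simp: tens_linear_def\<close>)
  next
    fix p q show "lin_form (h p q)" unfolding h_def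
      by (rule lin_form_lsum, rule lin_form_lsum) (use Hh b3 in \<open>auto simp: tens_linear_def\<close>)
  qed
  have "lsum \<beta> (tens_conv (tens_conv F G) Hh x) = lsum (\<lambda>u v. lsum (\<lambda>p q. h p q v) (\<Delta> u)) (\<Delta> x)"
    unfolding lsum_tens_conv[of \<beta>] lsum_tens_conv[of "\<lambda>a b. lsum (\<lambda>c d. \<beta> (a * c) (b * d)) (Hh _)"] h_def
    by (simp add: mult.assoc)
  also have "\<dots> = lsum (\<lambda>u v. lsum (\<lambda>p q. h u p q) (\<Delta> v)) (\<Delta> x)"
    by (rule lsum_coassoc_k[OF tr])
  also have "\<dots> = lsum \<beta> (tens_conv F (tens_conv G Hh) x)"
    unfolding lsum_tens_conv[of \<beta>] lsum_tens_conv[of "\<lambda>c d. \<beta> (_ * c) (_ * d)"] h_def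
    apply (rule lsum_cong)
    apply (rule lsum_swap)
    done
  finally show "lsum \<beta> (tens_conv (tens_conv F G) Hh x) = lsum \<beta> (tens_conv F (tens_conv G Hh) x)" .
qed

lemma tens_conv_cong_right:
  assumes "\<And>y. teq2 sK sK (G y) (G' y)"
  shows "teq2 sK sK (tens_conv F G x) (tens_conv F G' x)"
proof (rule teq2_KI)
  fix \<beta> assume b: "bil_KK_k \<beta>"
  show "lsum \<beta> (tens_conv F G x) = lsum \<beta> (tens_conv F G' x)"
    unfolding lsum_tens_conv using teq2_K_eval[OF assms bilinear_mult_left_pair[OF b]] by simp
qed

lemma tens_conv_cong_left:
  assumes "\<And>y. teq2 sK sK (F y) (F' y)"
  shows "teq2 sK sK (tens_conv F G x) (tens_conv F' G x)"
proof (rule teq2_KI)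
  fix \<beta> assume b: "bil_KK_k \<beta>"
  show "lsum \<beta> (tens_conv F G x) = lsum \<beta> (tens_conv F' G x)"
    unfolding lsum_tens_conv using teq2_K_eval[OF assms bilinear_lsum_mult_left_pair[OF b]] by simp
qed

definition tens_unit :: "'a \<Rightarrow> ('a \<times> 'a) list" where "tens_unit x = [(sK (\<epsilon> x) 1, 1)]"

lemma lsum_tens_unit: "bil_KK_k \<beta> \<Longrightarrow> lsum \<beta> (tens_unit x) = \<epsilon> x * \<beta> 1 1"
  by (simp add: tens_unit_def bilinearD)

lemma tens_linear_Delta: "tens_linear \<Delta>"
  unfolding tens_linear_def using lin_form_lsum_Delta by blast

lemma tens_conv_unit_right:
  assumes F: "tens_linear F"
  shows "teq2 sK sK (tens_conv F tens_unit x) (F x)"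
proof (rule teq2_KI)
  fix \<beta> assume b: "bil_KK_k \<beta>"
  have l: "lin_form (\<lambda>x. lsum \<beta> (F x))" using F b unfolding tens_linear_def by blast
  have "lsum \<beta> (tens_conv F tens_unit x) = lsum (\<lambda>u v. \<epsilon> v * lsum \<beta> (F u)) (\<Delta> x)"
    unfolding lsum_tens_conv tens_unit_def by (simp add: bilinearD[OF b] lsum_scale_k)
  also have "\<dots> = lsum (\<lambda>u v. lsum \<beta> (F (sK (\<epsilon> v) u))) (\<Delta> x)"
    by (simp add: lin_formD[OF l])
  also have "\<dots> = lsum \<beta> (F (lsum (\<lambda>u v. sK (\<epsilon> v) u) (\<Delta> x)))"
    by (simp add: lin_form_lsum_app[OF l])
  also have "\<dots> = lsum \<beta> (F x)" by (simp add: counit_right)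
  finally show "lsum \<beta> (tens_conv F tens_unit x) = lsum \<beta> (F x)" .
qed

lemma tens_conv_unit_left:
  assumes F: "tens_linear F"
  shows "teq2 sK sK (tens_conv tens_unit F x) (F x)"
proof (rule teq2_KI)
  fix \<beta> assume b: "bil_KK_k \<beta>"
  have l: "lin_form (\<lambda>x. lsum \<beta> (F x))" using F b unfolding tens_linear_def by blast
  have "lsum \<beta> (tens_conv tens_unit F x) = lsum (\<lambda>u v. \<epsilon> u * lsum \<beta> (F v)) (\<Delta> x)"
    unfolding lsum_tens_conv tens_unit_def by (simp add: bilinearD[OF b] lsum_scale_k)
  also have "\<dots> = lsum (\<lambda>u v. lsum \<beta> (F (sK (\<epsilon> u) v))) (\<Delta> x)"
    by (simp add: lin_formD[OF l])
  also have "\<dots> = lsum \<beta> (F (lsum (\<lambda>u v. sK (\<epsilon> u) v) (\<Delta> x)))"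
    by (simp add: lin_form_lsum_app[OF l])
  also have "\<dots> = lsum \<beta> (F x)" by (simp add: counit_left)
  finally show "lsum \<beta> (tens_conv tens_unit F x) = lsum \<beta> (F x)" .
qed

definition flip_S_Delta :: "'a \<Rightarrow> ('a \<times> 'a) list" where
  "flip_S_Delta x = map (\<lambda>(u, v). (S v, S u)) (\<Delta> x)"

lemma lsum_flip_S_Delta: "lsum \<beta> (flip_S_Delta x) = lsum (\<lambda>u v. \<beta> (S v) (S u)) (\<Delta> x)"
  unfolding flip_S_Delta_def by (simp add: lsum_map)

lemma tens_linear_flip_S_Delta: "tens_linear flip_S_Delta"
  unfolding tens_linear_def lsum_flip_S_Delta
proof (intro allI impI)
  fix \<beta> assume b: "bil_KK_k \<beta>"
  have "bil_KK_k (\<lambda>u v. \<beta> (S v) (S u))" unfolding bilinear_def by (simp add: bilinearD[OF b])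
  then show "lin_form (\<lambda>x. lsum (\<lambda>u v. \<beta> (S v) (S u)) (\<Delta> x))" by (rule lin_form_lsum_Delta)
qed

definition Delta_S :: "'a \<Rightarrow> ('a \<times> 'a) list" where "Delta_S x = \<Delta> (S x)"

lemma tens_linear_Delta_S: "tens_linear Delta_S"
  unfolding tens_linear_def Delta_S_def lin_form_def
  by (auto simp: lsum_Delta_add_k lsum_Delta_scale_k)

lemma tens_conv_Delta_S_Delta: "teq2 sK sK (tens_conv Delta_S \<Delta> x) (tens_unit x)"
proof (rule teq2_KI)
  fix \<beta> assume b: "bil_KK_k \<beta>"
  have l: "lin_form (\<lambda>z. lsum \<beta> (\<Delta> z))" by (rule lin_form_lsum_Delta[OF b])
  have "lsum \<beta> (tens_conv Delta_S \<Delta> x) = lsum (\<lambda>u v. lsum \<beta> (\<Delta> (S u * v))) (\<Delta> x)"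
    unfolding lsum_tens_conv Delta_S_def by (simp add: lsum_Delta_mult_k[OF b])
  also have "\<dots> = lsum \<beta> (\<Delta> (lsum (\<lambda>u v. S u * v) (\<Delta> x)))"
    by (simp add: lin_form_lsum_app[OF l])
  also have "\<dots> = lsum \<beta> (tens_unit x)"
    by (simp add: antipode_left lsum_Delta_scale_k[OF b] lsum_Delta_one_k[OF b] lsum_tens_unit[OF b])
  finally show "lsum \<beta> (tens_conv Delta_S \<Delta> x) = lsum \<beta> (tens_unit x)" .
qed

lemma tens_conv_Delta_flip_S_Delta: "teq2 sK sK (tens_conv \<Delta> flip_S_Delta x) (tens_unit x)"
proof (rule teq2_KI)
  fix \<beta> assume b: "bil_KK_k \<beta>"
  define \<Phi> where "\<Phi> a b v = lsum (\<lambda>c d. \<beta> (a * S d) (b * S c)) (\<Delta> v)" for a b v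
  have trP: "trilinear sK sK sK (*) \<Phi>"
    unfolding trilinear_def \<Phi>_def by (simp add: bilinearD[OF b] distrib_left distrib_right lsum_Delta_add_k lsum_Delta_scale_k bilinear_def lsum_add_fun lsum_scale_k)
  have inner: "lsum (\<lambda>p q. \<Phi> x1 p q) (\<Delta> v) = \<beta> (x1 * S v) 1" for x1 v
  proof -
    define h where "h p c d = \<beta> (x1 * S d) (p * S c)" for p c d
    have trh: "trilinear sK sK sK (*) h" unfolding trilinear_def h_def by (simp add: bilinearD[OF b] distrib_left distrib_right)
    have l2: "lin_form (\<lambda>z. \<beta> (x1 * S z) 1)" unfolding lin_form_def by (simp add: bilinearD[OF b] distrib_left)
    have "lsum (\<lambda>p q. \<Phi> x1 p q) (\<Delta> v) = lsum (\<lambda>p q. lsum (\<lambda>c d. h p c d) (\<Delta> q)) (\<Delta> v)"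
      unfolding \<Phi>_def h_def by simp
    also have "\<dots> = lsum (\<lambda>r d. lsum (\<lambda>p c. h p c d) (\<Delta> r)) (\<Delta> v)"
      by (rule lsum_coassoc_k[OF trh, symmetric])
    also have "\<dots> = lsum (\<lambda>r d. \<beta> (x1 * S d) (lsum (\<lambda>p c. p * S c) (\<Delta> r))) (\<Delta> v)"
      unfolding h_def by (simp add: bilinear_lsum_right[OF vector_space_field b])
    also have "\<dots> = lsum (\<lambda>r d. \<beta> (x1 * S (sK (\<epsilon> r) d)) 1) (\<Delta> v)"
      by (simp add: antipode_right bilinearD[OF b])
    also have "\<dots> = \<beta> (x1 * S (lsum (\<lambda>r d. sK (\<epsilon> r) d) (\<Delta> v))) 1"
      by (simp add: lin_form_lsum_app[OF l2])
    also have "\<dots> = \<beta> (x1 * S v) 1" by (simp add: counit_left)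
    finally show ?thesis .
  qed
  have l3: "lin_form (\<lambda>z. \<beta> z 1)" unfolding lin_form_def by (simp add: bilinearD[OF b])
  have "lsum \<beta> (tens_conv \<Delta> flip_S_Delta x) = lsum (\<lambda>u v. lsum (\<lambda>a b. \<Phi> a b v) (\<Delta> u)) (\<Delta> x)"
    unfolding lsum_tens_conv lsum_flip_S_Delta \<Phi>_def by simp
  also have "\<dots> = lsum (\<lambda>u v. lsum (\<lambda>p q. \<Phi> u p q) (\<Delta> v)) (\<Delta> x)"
    by (rule lsum_coassoc_k[OF trP])
  also have "\<dots> = lsum (\<lambda>u v. \<beta> (u * S v) 1) (\<Delta> x)"
    by (simp add: inner)
  also have "\<dots> = \<beta> (lsum (\<lambda>u v. u * S v) (\<Delta> x)) 1"
    by (simp add: lin_form_lsum_app[OF l3])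
  also have "\<dots> = lsum \<beta> (tens_unit x)" by (simp add: antipode_right lsum_tens_unit[OF b] bilinearD[OF b])
  finally show "lsum \<beta> (tens_conv \<Delta> flip_S_Delta x) = lsum \<beta> (tens_unit x)" .
qed

lemma S_anticomult: "teq2 sK sK (\<Delta> (S x)) (map (\<lambda>(u, v). (S v, S u)) (\<Delta> x))"
proof -
  have "teq2 sK sK (Delta_S x) (tens_conv Delta_S tens_unit x)" by (rule teq2_sym[OF tens_conv_unit_right[OF tens_linear_Delta_S]])
  also have "teq2 sK sK \<dots> (tens_conv Delta_S (tens_conv \<Delta> flip_S_Delta) x)"
    by (rule tens_conv_cong_right, rule teq2_sym, rule tens_conv_Delta_flip_S_Delta)
  also have "teq2 sK sK \<dots> (tens_conv (tens_conv Delta_S \<Delta>) flip_S_Delta x)"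
    by (rule teq2_sym, rule tens_conv_assoc[OF tens_linear_Delta_S tens_linear_Delta tens_linear_flip_S_Delta])
  also have "teq2 sK sK \<dots> (tens_conv tens_unit flip_S_Delta x)"
    by (rule tens_conv_cong_left, rule tens_conv_Delta_S_Delta)
  also have "teq2 sK sK \<dots> (flip_S_Delta x)" by (rule tens_conv_unit_left[OF tens_linear_flip_S_Delta])
  finally show ?thesis by (simp add: Delta_S_def flip_S_Delta_def)
qed

lemma lsum_Delta_S: "bil_KK_k \<beta> \<Longrightarrow> lsum \<beta> (\<Delta> (S x)) = lsum (\<lambda>u v. \<beta> (S v) (S u)) (\<Delta> x)"
  using teq2_K_eval[OF S_anticomult] by (simp add: lsum_map)

lemma lsum_Delta_SS: "bil_KK_k \<beta> \<Longrightarrow> lsum \<beta> (\<Delta> (S (S x))) = lsum (\<lambda>u v. \<beta> (S (S u)) (S (S v))) (\<Delta> x)"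
proof -
  assume b: "bil_KK_k \<beta>"
  have b2: "bil_KK_k (\<lambda>u v. \<beta> (S v) (S u))" unfolding bilinear_def by (simp add: bilinearD[OF b])
  show ?thesis by (simp add: lsum_Delta_S[OF b] lsum_Delta_S[OF b2])
qed

definition grouplike :: "'a \<Rightarrow> bool" where
  "grouplike g \<longleftrightarrow> teq2 sK sK (\<Delta> g) [(g, g)] \<and> \<epsilon> g = 1"

lemma lsum_Delta_grouplike: "grouplike g \<Longrightarrow> vector_space sc \<Longrightarrow> bilinear sK sK sc \<beta> \<Longrightarrow> lsum \<beta> (\<Delta> g) = \<beta> g g"
  unfolding grouplike_def using teq2_eval by fastforce

lemma grouplike_S_inverse: assumes "grouplike g" shows "g * S g = 1" "S g * g = 1"
proof -
  have b1: "bil_KK_K (\<lambda>u v. u * S v)" and b2: "bil_KK_K (\<lambda>u v. S u * v)" unfolding bilinear_def by (simp_all add: algebra_simps)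
  show "g * S g = 1" using antipode_right[of g] lsum_Delta_grouplike[OF assms vector_space_K b1] assms by (simp add: grouplike_def)
  show "S g * g = 1" using antipode_left[of g] lsum_Delta_grouplike[OF assms vector_space_K b2] assms by (simp add: grouplike_def)
qed

lemma grouplike_S: assumes "grouplike g" shows "grouplike (S g)"
  unfolding grouplike_def
proof
  show "teq2 sK sK (\<Delta> (S g)) [(S g, S g)]"
  proof (rule teq2_KI)
    fix \<beta> assume b: "bil_KK_k \<beta>"
    have b2: "bil_KK_k (\<lambda>u v. \<beta> (S v) (S u))" unfolding bilinear_def by (simp add: bilinearD[OF b])
    show "lsum \<beta> (\<Delta> (S g)) = lsum \<beta> [(S g, S g)]"
      by (simp add: lsum_Delta_S[OF b] lsum_Delta_grouplike[OF assms vector_space_field b2])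
  qed
  show "\<epsilon> (S g) = 1" using assms by (simp add: grouplike_def)
qed

lemma left_inverse_eq_right_inverse: "(a::'a) * b = 1 \<Longrightarrow> c * a = 1 \<Longrightarrow> b = c"
  by (metis mult.assoc mult_1_left mult_1_right)

lemma grouplike_SS: assumes "grouplike g" shows "S (S g) = g"
  using left_inverse_eq_right_inverse[OF grouplike_S_inverse(1)[OF grouplike_S[OF assms]] grouplike_S_inverse(1)[OF assms]] .

lemma ring_inv_grouplike: assumes "grouplike g" shows "ring_inv g = S g"
  unfolding ring_inv_def
proof (rule the_equality)
  show "g * S g = 1 \<and> S g * g = 1" using grouplike_S_inverse[OF assms] by simp
  fix y assume "g * y = 1 \<and> y * g = 1"
  then show "y = S g" using left_inverse_eq_right_inverse[of g y "S g"] grouplike_S_inverse[OF assms] by simp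
qed

lemma grouplike_conj_cancel:
  assumes "grouplike g"
  shows "g * (S g * x * g) * S g = x"
proof -
  have "g * (S g * x * g) * S g = (g * S g) * x * (g * S g)" by (simp add: mult.assoc)
  then show ?thesis by (simp add: grouplike_S_inverse(1)[OF assms])
qed

lemma surj_S_if_surj_conj_S2:
  assumes g: "grouplike g" and surj: "surj (\<lambda>x. S g * S (S x) * g)"
  shows "surj S"
proof -
  have "x \<in> range S" for x
  proof -
    obtain w where w: "S g * x * g = S g * S (S w) * g" using surjD[OF surj] by blast
    have "x = g * (S g * x * g) * S g" by (rule grouplike_conj_cancel[OF g, symmetric])
    also have "\<dots> = S (S w)" unfolding w by (rule grouplike_conj_cancel[OF g])
    finally show ?thesis by blast
  qed
  then show ?thesis by auto
qed

lemma linear_K_scale: "Vector_Spaces.linear sK sK f \<Longrightarrow> f (sK c x) = sK c (f x)"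
  by (simp add: Vector_Spaces.linear_iff)

lemma linear_K_sum: "Vector_Spaces.linear sK sK f \<Longrightarrow> f (\<Sum>i\<in>A. g i) = (\<Sum>i\<in>A. f (g i))"
  using linear_K_scale[of f 0 0]
  by (induct A rule: infinite_finite_induct) (simp_all add: Vector_Spaces.linear_iff)

lemma teq2_map_linear:
  assumes f: "Vector_Spaces.linear sK sK f" and t: "teq2 sK sK t t'"
  shows "teq2 sK sK (map (\<lambda>(u, v). (f u, f v)) t) (map (\<lambda>(u, v). (f u, f v)) t')"
proof (rule teq2_KI)
  fix \<beta> assume b: "bil_KK_k \<beta>"
  interpret f: Vector_Spaces.linear sK sK f by (rule f)
  have "bil_KK_k (\<lambda>u v. \<beta> (f u) (f v))"
    unfolding bilinear_def by (simp add: bilinearD[OF b] f.add f.scale)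
  then show "lsum \<beta> (map (\<lambda>(u, v). (f u, f v)) t) = lsum \<beta> (map (\<lambda>(u, v). (f u, f v)) t')"
    using teq2_K_eval[OF t] by (simp add: lsum_map)
qed

lemma hopf_endo_comp:
  assumes f: "hopf_endo sK \<Delta> \<epsilon> S f" and g: "hopf_endo sK \<Delta> \<epsilon> S g"
  shows "hopf_endo sK \<Delta> \<epsilon> S (f \<circ> g)"
proof -
  have lin: "Vector_Spaces.linear sK sK f" "Vector_Spaces.linear sK sK g"
    using f g by (simp_all add: hopf_endo_def)
  have "teq2 sK sK (\<Delta> (f (g x))) (map (\<lambda>(u, v). (f (g u), f (g v))) (\<Delta> x))" for x
  proof -
    have "teq2 sK sK (\<Delta> (f (g x))) (map (\<lambda>(u, v). (f u, f v)) (\<Delta> (g x)))"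
      using f by (simp add: hopf_endo_def)
    also have "teq2 sK sK \<dots> (map (\<lambda>(u, v). (f u, f v)) (map (\<lambda>(u, v). (g u, g v)) (\<Delta> x)))"
      using g by (intro teq2_map_linear[OF lin(1)]) (simp add: hopf_endo_def)
    finally show ?thesis by (simp add: comp_def case_prod_unfold)
  qed
  then show ?thesis
    using f g Vector_Spaces.linear_compose[OF lin(2) lin(1)] by (simp add: hopf_endo_def)
qed

lemma hopf_endo_S2: "hopf_endo sK \<Delta> \<epsilon> S (S \<circ> S)"
  unfolding hopf_endo_def
proof (intro conjI allI)
  show "Vector_Spaces.linear sK sK (S \<circ> S)"
    by (rule Vector_Spaces.linear_compose[OF linear_S linear_S])
  show "teq2 sK sK (\<Delta> ((S \<circ> S) x)) (map (\<lambda>(u, v). ((S \<circ> S) u, (S \<circ> S) v)) (\<Delta> x))" for x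
    by (rule teq2_KI) (simp add: lsum_Delta_SS lsum_map)
qed (simp_all add: S_mult)

lemma hopf_endo_conj_grouplike:
  assumes g: "grouplike g"
  shows "hopf_endo sK \<Delta> \<epsilon> S (\<lambda>x. S g * x * g)"
  unfolding hopf_endo_def
proof (intro conjI allI)
  show "Vector_Spaces.linear sK sK (\<lambda>x. S g * x * g)"
    unfolding Vector_Spaces.linear_iff using vector_space_K by (simp add: algebra_simps)
  have cancel: "g * (S g * z) = z" for z
    using grouplike_S_inverse(1)[OF g] by (metis mult.assoc mult_1_left)
  show "S g * (x * y) * g = S g * x * g * (S g * y * g)" for x y
    by (simp add: mult.assoc cancel)
  show "S g * 1 * g = 1" by (simp add: grouplike_S_inverse(2)[OF g])
  show "teq2 sK sK (\<Delta> (S g * x * g)) (map (\<lambda>(u, v). (S g * u * g, S g * v * g)) (\<Delta> x))" for x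
  proof (rule teq2_KI)
    fix \<beta> assume b: "bil_KK_k \<beta>"
    have "lsum \<beta> (\<Delta> (S g * x * g)) = lsum (\<lambda>u v. lsum (\<lambda>p q. \<beta> (u * p) (v * q)) (\<Delta> g)) (\<Delta> (S g * x))"
      by (rule lsum_Delta_mult_k[OF b])
    also have "\<dots> = lsum (\<lambda>u v. \<beta> (u * g) (v * g)) (\<Delta> (S g * x))"
      by (rule lsum_cong) (rule lsum_Delta_grouplike[OF g vector_space_field bilinear_mult_left_pair[OF b]])
    also have "\<dots> = lsum (\<lambda>u v. lsum (\<lambda>p q. \<beta> (u * p * g) (v * q * g)) (\<Delta> x)) (\<Delta> (S g))"
      by (rule lsum_Delta_mult_k[OF bilinear_mult_right_pair[OF b]])
    also have "\<dots> = lsum (\<lambda>p q. \<beta> (S g * p * g) (S g * q * g)) (\<Delta> x)"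
      by (rule lsum_Delta_grouplike[OF grouplike_S[OF g] vector_space_field
            bilinear_lsum_mult_left_pair[OF bilinear_mult_right_pair[OF b]]])
    finally show "lsum \<beta> (\<Delta> (S g * x * g)) = lsum \<beta> (map (\<lambda>(u, v). (S g * u * g, S g * v * g)) (\<Delta> x))"
      by (simp add: lsum_map)
  qed
  show "\<epsilon> (S g * x * g) = \<epsilon> x" for x
    using g grouplike_S[OF g] by (simp add: grouplike_def)
  show "S (S g * x * g) = S g * S x * g" for x
    by (simp add: S_mult grouplike_SS[OF g] mult.assoc)
qed

lemma Delta_zero: "teq2 sK sK (\<Delta> 0) []"
proof (rule teq2_KI)
  fix \<beta> assume b: "bil_KK_k \<beta>"
  show "lsum \<beta> (\<Delta> 0) = lsum \<beta> []" using lsum_Delta_scale_k[OF b, of 0 0] by simp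
qed

lemma tmul_cong:
  assumes "teq2 sK sK t t'" "teq2 sK sK u u'"
  shows "teq2 sK sK (tmul t u) (tmul t' u')"
proof (rule teq2_KI)
  fix \<beta> assume b: "bil_KK_k \<beta>"
  have "lsum \<beta> (tmul t u) = lsum (\<lambda>a b. lsum (\<lambda>c d. \<beta> (a * c) (b * d)) u) t" by (rule lsum_tmul)
  also have "\<dots> = lsum (\<lambda>a b. lsum (\<lambda>c d. \<beta> (a * c) (b * d)) u) t'"
    by (rule teq2_K_eval[OF assms(1) bilinear_lsum_mult_left_pair[OF b]])
  also have "\<dots> = lsum (\<lambda>a b. lsum (\<lambda>c d. \<beta> (a * c) (b * d)) u') t'"
    by (rule lsum_cong) (rule teq2_K_eval[OF assms(2) bilinear_mult_left_pair[OF b]])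
  also have "\<dots> = lsum \<beta> (tmul t' u')" by (rule lsum_tmul[symmetric])
  finally show "lsum \<beta> (tmul t u) = lsum \<beta> (tmul t' u')" .
qed

lemma flip_S_cong:
  assumes "teq2 sK sK t t'"
  shows "teq2 sK sK (map (\<lambda>(u, v). (S v, S u)) t) (map (\<lambda>(u, v). (S v, S u)) t')"
proof (rule teq2_KI)
  fix \<beta> assume b: "bil_KK_k \<beta>"
  have b2: "bil_KK_k (\<lambda>u v. \<beta> (S v) (S u))" unfolding bilinear_def by (simp add: bilinearD[OF b])
  show "lsum \<beta> (map (\<lambda>(u, v). (S v, S u)) t) = lsum \<beta> (map (\<lambda>(u, v). (S v, S u)) t')"
    using teq2_K_eval[OF assms b2] by (simp add: lsum_map)
qed

definition S_stable_subalgebra :: "'a set \<Rightarrow> bool" where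
  "S_stable_subalgebra X \<longleftrightarrow> subspace X \<and> 1 \<in> X \<and> (\<forall>x\<in>X. \<forall>z\<in>X. x * z \<in> X) \<and> S ` X \<subseteq> X"

lemma S_stable_subalgebra_range:
  assumes "hopf_endo sK \<Delta> \<epsilon> S f"
  shows "S_stable_subalgebra (range f)"
proof -
  interpret f: Vector_Spaces.linear sK sK f using assms by (simp add: hopf_endo_def)
  show ?thesis
    unfolding S_stable_subalgebra_def
  proof (intro conjI ballI subsetI)
    show "subspace (range f)" by (rule f.subspace_image[OF subspace_UNIV])
    show "1 \<in> range f" using assms by (metis hopf_endo_def rangeI)
    show "x * z \<in> range f" if "x \<in> range f" "z \<in> range f" for x z
      using that assms by (clarsimp simp: hopf_endo_def) (metis rangeI)
    show "x \<in> range f" if "x \<in> S ` range f" for x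
      using that assms by (auto simp: hopf_endo_def)
  qed
qed

lemma S_stable_subalgebra_equalizer:
  assumes f: "hopf_endo sK \<Delta> \<epsilon> S f" and g: "hopf_endo sK \<Delta> \<epsilon> S g"
  shows "S_stable_subalgebra {x. f x = g x}"
proof -
  interpret f: Vector_Spaces.linear sK sK f using f by (simp add: hopf_endo_def)
  interpret g: Vector_Spaces.linear sK sK g using g by (simp add: hopf_endo_def)
  show ?thesis
    using f g unfolding S_stable_subalgebra_def subspace_def hopf_endo_def
    by (auto simp: f.add f.scale g.add g.scale f.zero g.zero) metis+
qed

definition Delta_into :: "'a set \<Rightarrow> 'a set" where
  "Delta_into X = {x. \<exists>t. set t \<subseteq> X \<times> X \<and> teq2 sK sK (\<Delta> x) t}"

lemma S_stable_subalgebra_Delta_into: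
  assumes X: "S_stable_subalgebra X"
  shows "S_stable_subalgebra (X \<inter> Delta_into X)"
  unfolding S_stable_subalgebra_def subspace_def
proof (intro conjI ballI allI subsetI)
  have sub: "subspace X" and one: "1 \<in> X" and mult: "\<And>x z. x \<in> X \<Longrightarrow> z \<in> X \<Longrightarrow> x * z \<in> X"
    using X unfolding S_stable_subalgebra_def by auto
  show "0 \<in> X \<inter> Delta_into X"
    using subspace_0[OF sub] Delta_zero unfolding Delta_into_def by (auto intro!: exI[of _ "[]"])
  show "1 \<in> X \<inter> Delta_into X"
    using one Delta_one unfolding Delta_into_def by (auto intro!: exI[of _ "[(1, 1)]"])
  fix x z assume x: "x \<in> X \<inter> Delta_into X" and z: "z \<in> X \<inter> Delta_into X"
  then obtain t u where t: "set t \<subseteq> X \<times> X" "teq2 sK sK (\<Delta> x) t"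
    and u: "set u \<subseteq> X \<times> X" "teq2 sK sK (\<Delta> z) u"
    unfolding Delta_into_def by blast
  have "teq2 sK sK (\<Delta> (x + z)) (t @ u)" using teq2_trans[OF Delta_add teq2_append[OF t(2) u(2)]] .
  then show "x + z \<in> X \<inter> Delta_into X"
    using x z t(1) u(1) sub unfolding Delta_into_def subspace_def by (auto intro!: exI[of _ "t @ u"])
  have "teq2 sK sK (\<Delta> (x * z)) (tmul t u)" using teq2_trans[OF Delta_mult tmul_cong[OF t(2) u(2)]] .
  moreover have "set (tmul t u) \<subseteq> X \<times> X"
    using t(1) u(1) unfolding tmul_def by (auto intro: mult)
  ultimately show "x * z \<in> X \<inter> Delta_into X"
    using x z mult unfolding Delta_into_def by blast
next
  fix c x assume x: "x \<in> X \<inter> Delta_into X"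
  then obtain t where t: "set t \<subseteq> X \<times> X" "teq2 sK sK (\<Delta> x) t" unfolding Delta_into_def by blast
  have "teq2 sK sK (\<Delta> (sK c x)) (scale_left_tens sK c t)"
    using teq2_trans[OF Delta_scale teq2_scale_left_tens[OF t(2)]] .
  moreover have "set (scale_left_tens sK c t) \<subseteq> X \<times> X"
    using t(1) X unfolding scale_left_tens_def S_stable_subalgebra_def subspace_def by auto
  ultimately show "sK c x \<in> X \<inter> Delta_into X"
    using x X unfolding Delta_into_def S_stable_subalgebra_def subspace_def by blast
next
  fix x assume "x \<in> S ` (X \<inter> Delta_into X)"
  then obtain w t where x: "x = S w" and w: "w \<in> X" and t: "set t \<subseteq> X \<times> X" "teq2 sK sK (\<Delta> w) t"
    unfolding Delta_into_def by blast
  have "teq2 sK sK (\<Delta> (S w)) (map (\<lambda>(u, v). (S v, S u)) t)"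
    using teq2_trans[OF S_anticomult flip_S_cong[OF t(2)]] .
  moreover have "set (map (\<lambda>(u, v). (S v, S u)) t) \<subseteq> X \<times> X"
    using t(1) X unfolding S_stable_subalgebra_def by fastforce
  ultimately show "x \<in> X \<inter> Delta_into X"
    using x w X unfolding Delta_into_def S_stable_subalgebra_def by blast
qed

lemma hopf_subalgebraI:
  assumes "S_stable_subalgebra X" "X \<subseteq> Delta_into X"
  shows "hopf_subalgebra sK \<Delta> S X"
  using assms unfolding hopf_subalgebra_def S_stable_subalgebra_def Delta_into_def by blast

lemma S_sum: "S (\<Sum>s\<in>A. f s) = (\<Sum>s\<in>A. S (f s))"
  by (induct A rule: infinite_finite_induct) auto

lemma S_prod_list: "S (prod_list xs) = prod_list (rev (map S xs))"
  by (induct xs) (auto simp: S_mult)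

end

lemma sum_swap3: "(\<Sum>s\<in>A. \<Sum>j\<in>B'. \<Sum>m\<in>C. f s j m) = (\<Sum>m\<in>C. \<Sum>s\<in>A. \<Sum>j\<in>B'. (f s j m :: 'b::comm_monoid_add))"
proof -
  have "(\<Sum>s\<in>A. \<Sum>j\<in>B'. \<Sum>m\<in>C. f s j m) = (\<Sum>s\<in>A. \<Sum>m\<in>C. \<Sum>j\<in>B'. f s j m)"
    by (rule sum.cong[OF refl]) (rule sum.swap)
  also have "\<dots> = (\<Sum>m\<in>C. \<Sum>s\<in>A. \<Sum>j\<in>B'. f s j m)" by (rule sum.swap)
  finally show ?thesis .
qed

lemma sum_delta_right: "j < (n::nat) \<Longrightarrow> (\<Sum>t<n. f t * (if t = j then 1 else 0)) = (f j :: 'b::semiring_1)"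
proof -
  assume j: "j < n"
  have "(\<Sum>t<n. f t * (if t = j then 1 else 0)) = (\<Sum>t<n. if t = j then f t else 0)"
    by (rule sum.cong) auto
  also have "\<dots> = f j" using j by simp
  finally show ?thesis .
qed

lemma sum_delta_left: "j < (n::nat) \<Longrightarrow> (\<Sum>t<n. (if j = t then 1 else 0) * f t) = (f j :: 'b::semiring_1)"
proof -
  assume j: "j < n"
  have "(\<Sum>t<n. (if j = t then 1 else 0) * f t) = (\<Sum>t<n. if j = t then f t else 0)"
    by (rule sum.cong) auto
  also have "\<dots> = f j" using j by simp
  finally show ?thesis .
qed

lemma mat_left_inverse_eq_right_inverse:
  fixes A L R :: "nat \<Rightarrow> nat \<Rightarrow> 'k::comm_ring_1"
  assumes L: "\<forall>i<n. \<forall>j<n. (\<Sum>k<n. L i k * A k j) = (if i = j then 1 else 0)"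
    and R: "\<forall>i<n. \<forall>j<n. (\<Sum>k<n. A i k * R k j) = (if i = j then 1 else 0)"
    and i: "i < n" and j: "j < n"
  shows "L i j = R i j"
proof -
  have "L i j = (\<Sum>m<n. L i m * (if m = j then 1 else 0))" using j by (rule sum_delta_right[symmetric])
  also have "\<dots> = (\<Sum>m<n. L i m * (\<Sum>k<n. A m k * R k j))" using R j by simp
  also have "\<dots> = (\<Sum>k<n. (\<Sum>m<n. L i m * A m k) * R k j)"
    by (simp add: sum_distrib_left sum_distrib_right mult.assoc) (rule sum.swap)
  also have "\<dots> = (\<Sum>k<n. (if i = k then 1 else 0) * R k j)" using L i by simp
  also have "\<dots> = R i j" using i by (rule sum_delta_left)
  finally show ?thesis .
qed

lemma mat_inv_eqI:
  fixes A B :: "nat \<Rightarrow> nat \<Rightarrow> 'k::field"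
  assumes zero: "\<forall>i j. n \<le> i \<or> n \<le> j \<longrightarrow> B i j = 0"
    and "\<forall>i<n. \<forall>j<n. (\<Sum>k<n. A i k * B k j) = (if i = j then 1 else 0)"
    and left: "\<forall>i<n. \<forall>j<n. (\<Sum>k<n. B i k * A k j) = (if i = j then 1 else 0)"
  shows "mat_inv n A = B"
  unfolding mat_inv_def
proof (rule the_equality)
  fix B' assume B': "(\<forall>i j. n \<le> i \<or> n \<le> j \<longrightarrow> B' i j = 0) \<and>
    (\<forall>i<n. \<forall>j<n. (\<Sum>k<n. A i k * B' k j) = (if i = j then 1 else 0)) \<and>
    (\<forall>i<n. \<forall>j<n. (\<Sum>k<n. B' i k * A k j) = (if i = j then 1 else 0))"
  show "B' = B"
  proof (intro ext)
    fix i j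
    show "B' i j = B i j"
    proof (cases "i < n \<and> j < n")
      case True
      then show ?thesis using mat_left_inverse_eq_right_inverse[OF left, of B'] B' by simp
    next
      case False
      then show ?thesis using zero B' by auto
    qed
  qed
qed (use assms in blast)

lemma sum_list_map_upt: "sum_list (map f [0..<n]) = (\<Sum>s<n. f s)"
  by (induct n) auto

locale frobenius_comodule = hopf_alg sK \<Delta> \<epsilon> S
  for sK :: "'k::field \<Rightarrow> 'a::ring_1 \<Rightarrow> 'a" and \<Delta> \<epsilon> S +
  fixes sE :: "'k \<Rightarrow> 'e::ring_1 \<Rightarrow> 'e" and Egr :: "nat \<Rightarrow> 'e set"
    and l :: nat and B :: "'e \<Rightarrow> 'e \<Rightarrow> 'k" and \<mu> :: "'e \<Rightarrow> 'e"
    and \<rho> :: "'e \<Rightarrow> ('a \<times> 'e) list"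
    and fe :: 'e and D :: 'a
    and n :: nat and a :: "nat \<Rightarrow> 'e" and \<alpha> :: "nat \<Rightarrow> nat \<Rightarrow> 'k" and y :: "nat \<Rightarrow> nat \<Rightarrow> 'a"
  assumes E_cga: "connected_graded_algebra sE Egr"
    and E_frob: "graded_frobenius sE Egr l B"
    and mu_nak: "nakayama_aut sE Egr B \<mu>"
    and E_comod: "graded_comodule_algebra sK \<Delta> \<epsilon> sE Egr \<rho>"
    and inner_faithful: "inner_faithful_E1 sK \<Delta> S sE Egr \<rho>"
    and fe_l: "fe \<in> Egr l" and fe_nz: "fe \<noteq> 0"
    and codet: "teq2 sK sE (\<rho> fe) [(D, fe)]"
    and a_inj: "inj_on a {..<n}" and a_ind: "\<not> module.dependent sE (a ` {..<n})"
    and a_span: "module.span sE (a ` {..<n}) = Egr 1"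
    and alpha: "\<forall>i<n. \<mu> (a i) = (\<Sum>j<n. sE (\<alpha> i j) (a j))"
    and Ymat: "\<forall>i<n. teq2 sK sE (\<rho> (a i)) (map (\<lambda>s. (y i s, a s)) [0..<n])"
begin

lemma k_algebra_E: "k_algebra sE" using E_cga by (simp add: connected_graded_algebra_def)
lemma vector_space_E: "vector_space sE" using k_algebra_E by (simp add: k_algebra_def)

sublocale E: vector_space sE by (rule vector_space_E)

lemma sE_mult_left[simp]: "sE c x * z = sE c (x * z)"
  using k_algebra_E by (simp add: k_algebra_def)
lemma sE_mult_right[simp]: "x * sE c z = sE c (x * z)"
  using k_algebra_E by (simp add: k_algebra_def)

lemma rho_add: "teq2 sK sE (\<rho> (x + z)) (\<rho> x @ \<rho> z)" using E_comod by (simp add: graded_comodule_algebra_def)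
lemma rho_scale: "teq2 sK sE (\<rho> (sE c x)) (scale_left_tens sK c (\<rho> x))" using E_comod by (simp add: graded_comodule_algebra_def scale_left_tens_def)
lemma rho_coassoc: "teq3 sK sK sE (left_apply \<Delta> (\<rho> x)) (right_apply \<rho> (\<rho> x))"
  using E_comod by (simp add: graded_comodule_algebra_def)
lemma rho_counit: "lsum (\<lambda>u v. sE (\<epsilon> u) v) (\<rho> x) = x"
  using E_comod by (simp add: graded_comodule_algebra_def lsum_def)
lemma rho_mult: "teq2 sK sE (\<rho> (x * z)) (tmul (\<rho> x) (\<rho> z))" using E_comod by (simp add: graded_comodule_algebra_def)
lemma rho_graded: "x \<in> Egr d \<Longrightarrow> \<exists>t. snd ` set t \<subseteq> Egr d \<and> teq2 sK sE (\<rho> x) t"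
  using E_comod by (simp add: graded_comodule_algebra_def)

lemma linear_mu: "Vector_Spaces.linear sE sE \<mu>" and inj_mu: "inj \<mu>" and mu_Egr: "\<mu> ` Egr d = Egr d"
  using mu_nak unfolding nakayama_aut_def by (blast intro: bij_is_inj)+

lemma mu_add: "\<mu> (x + z) = \<mu> x + \<mu> z" and mu_scale: "\<mu> (sE c x) = sE c (\<mu> x)"
  using linear_mu by (simp_all add: Vector_Spaces.linear_iff)

lemma B_nakayama: "B x w = B w (\<mu> x)"
  using mu_nak unfolding nakayama_aut_def by blast

lemma lsum_rho_add:
  assumes "vector_space sc" "bilinear sK sE sc \<beta>"
  shows "lsum \<beta> (\<rho> (x + z)) = lsum \<beta> (\<rho> x) + lsum \<beta> (\<rho> z)"
  using teq2_eval[OF assms(1) rho_add assms(2)] by simp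
lemma lsum_rho_scale:
  assumes "vector_space sc" "bilinear sK sE sc \<beta>"
  shows "lsum \<beta> (\<rho> (sE c x)) = sc c (lsum \<beta> (\<rho> x))"
  using teq2_eval[OF assms(1) rho_scale assms(2)] lsum_scale_left_tens[OF assms] by simp
lemma lsum_rho_mult:
  assumes "vector_space sc" "bilinear sK sE sc \<beta>"
  shows "lsum \<beta> (\<rho> (x * z)) = lsum (\<lambda>p q. lsum (\<lambda>c d. \<beta> (p * c) (q * d)) (\<rho> z)) (\<rho> x)"
  using teq2_eval[OF assms(1) rho_mult assms(2)] lsum_tmul by metis
lemma lsum_rho_coassoc:
  assumes "vector_space sc" "trilinear sK sK sE sc h"
  shows "lsum (\<lambda>u v. lsum (\<lambda>p q. h p q v) (\<Delta> u)) (\<rho> x) = lsum (\<lambda>u v. lsum (\<lambda>p q. h u p q) (\<rho> v)) (\<rho> x)"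
  using teq3_eval[OF assms(1) rho_coassoc assms(2)] lsum3_left_apply lsum3_right_apply by metis
lemma lsum_rho_basis:
  assumes "vector_space sc" "bilinear sK sE sc \<beta>" "i < n"
  shows "lsum \<beta> (\<rho> (a i)) = (\<Sum>s<n. \<beta> (y i s) (a s))"
proof -
  have "lsum \<beta> (\<rho> (a i)) = lsum \<beta> (map (\<lambda>s. (y i s, a s)) [0..<n])"
    using teq2_eval[OF assms(1) _ assms(2)] Ymat assms(3) by blast
  also have "\<dots> = (\<Sum>s<n. \<beta> (y i s) (a s))"
    by (simp add: lsum_def o_def sum_list_map_upt)
  finally show ?thesis .
qed
lemma lsum_rho_top:
  assumes "vector_space sc" "bilinear sK sE sc \<beta>"
  shows "lsum \<beta> (\<rho> fe) = \<beta> D fe"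
  using teq2_eval[OF assms(1) codet assms(2)] by simp
lemma lsum_rho_zero:
  assumes "vector_space sc" "bilinear sK sE sc \<beta>"
  shows "lsum \<beta> (\<rho> 0) = 0"
proof -
  have m: "module sc" using assms(1) module_iff_vector_space by blast
  show ?thesis using lsum_rho_scale[OF assms, of 0 0] module.scale_zero_left[OF m] by simp
qed

abbreviation "bil_KE_k \<equiv> bilinear sK sE ((*) :: 'k \<Rightarrow> 'k \<Rightarrow> 'k)"

lemmas lsum_rho_add_k = lsum_rho_add[OF vector_space_field]
  and lsum_rho_scale_k = lsum_rho_scale[OF vector_space_field]
  and lsum_rho_coassoc_k = lsum_rho_coassoc[OF vector_space_field]
  and lsum_rho_basis_k = lsum_rho_basis[OF vector_space_field]
  and lsum_rho_top_k = lsum_rho_top[OF vector_space_field]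
  and lsum_rho_zero_k = lsum_rho_zero[OF vector_space_field]
  and lsum_rho_add_K = lsum_rho_add[OF vector_space_K]
  and lsum_rho_scale_K = lsum_rho_scale[OF vector_space_K]
  and lsum_rho_mult_K = lsum_rho_mult[OF vector_space_K]
  and lsum_rho_basis_K = lsum_rho_basis[OF vector_space_K]
  and lsum_rho_top_K = lsum_rho_top[OF vector_space_K]
  and lsum_rho_zero_K = lsum_rho_zero[OF vector_space_K]
  and lsum_rho_basis_E = lsum_rho_basis[OF vector_space_E]
  and lsum_rho_top_E = lsum_rho_top[OF vector_space_E]

lemma basis_coeff_eq_zero:
  assumes "(\<Sum>j<n. sE (c j) (a j)) = 0" "j < n"
  shows "c j = 0"
proof -
  let ?A = "a ` {..<n}"
  define u where "u v = c (the_inv_into {..<n} a v)" for v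
  have "(\<Sum>v\<in>?A. sE (u v) v) = (\<Sum>j<n. sE (u (a j)) (a j))"
    by (rule sum.reindex[OF a_inj, unfolded o_def])
  also have "\<dots> = (\<Sum>j<n. sE (c j) (a j))"
    by (rule sum.cong) (auto simp: u_def the_inv_into_f_f[OF a_inj])
  finally have "(\<Sum>v\<in>?A. sE (u v) v) = 0" using assms(1) by simp
  then have "\<forall>v\<in>?A. u v = 0" using a_ind E.dependent_finite[of ?A] by blast
  then show ?thesis using assms(2) by (simp add: u_def the_inv_into_f_f[OF a_inj])
qed

lemma basis_coeff_unique:
  assumes "(\<Sum>j<n. sE (c j) (a j)) = (\<Sum>j<n. sE (c' j) (a j))" "j < n"
  shows "c j = c' j"
proof -
  have "(\<Sum>j<n. sE (c j - c' j) (a j)) = 0"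
    using assms(1) by (simp add: E.scale_left_diff_distrib sum_subtractf)
  then show ?thesis using basis_coeff_eq_zero[of "\<lambda>j. c j - c' j" j] assms(2) by simp
qed

lemma span_basis_repr:
  assumes "v \<in> E.span (a ` {..<n})"
  shows "\<exists>c. v = (\<Sum>j<n. sE (c j) (a j))"
proof -
  obtain u where "v = (\<Sum>w\<in>a ` {..<n}. sE (u w) w)"
    using assms E.span_finite[of "a ` {..<n}"] by auto
  also have "\<dots> = (\<Sum>j<n. sE (u (a j)) (a j))"
    by (rule sum.reindex[OF a_inj, unfolded o_def])
  finally show ?thesis by (rule exI[of _ "\<lambda>j. u (a j)"])
qed

lemma ex_coord: "\<exists>\<phi>. Vector_Spaces.linear sE ((*) :: 'k \<Rightarrow> 'k \<Rightarrow> 'k) \<phi> \<and> (\<forall>s<n. \<phi> (a s) = (if s = j then 1 else 0))"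
proof -
  interpret p: vector_space_pair sE "(*) :: 'k \<Rightarrow> 'k \<Rightarrow> 'k"
    by unfold_locales (auto simp: algebra_simps)
  have ind: "E.independent (a ` {..<n})" using a_ind by simp
  obtain g where g: "Vector_Spaces.linear sE (*) g" "\<forall>v\<in>a ` {..<n}. g v = (if j < n \<and> v = a j then 1 else 0)"
    using p.linear_independent_extend[OF ind, of "\<lambda>v. if j < n \<and> v = a j then 1 else 0"] by blast
  have "g (a s) = (if s = j then 1 else 0)" if "s < n" for s
    using g(2) that a_inj by (auto simp: inj_on_def)
  then show ?thesis using g(1) by blast
qed

definition coord :: "nat \<Rightarrow> 'e \<Rightarrow> 'k" where
  "coord j = (SOME \<phi>. Vector_Spaces.linear sE ((*) :: 'k \<Rightarrow> 'k \<Rightarrow> 'k) \<phi> \<and> (\<forall>s<n. \<phi> (a s) = (if s = j then 1 else 0)))"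

lemma coord: "Vector_Spaces.linear sE ((*) :: 'k \<Rightarrow> 'k \<Rightarrow> 'k) (coord j)" "s < n \<Longrightarrow> coord j (a s) = (if s = j then 1 else 0)"
  using someI_ex[OF ex_coord[of j]] unfolding coord_def by auto

lemma coord_add[simp]: "coord j (x + z) = coord j x + coord j z" using coord(1) by (simp add: Vector_Spaces.linear_iff)
lemma coord_scale[simp]: "coord j (sE c x) = c * coord j x" using coord(1) by (simp add: Vector_Spaces.linear_iff)
lemma coord_zero[simp]: "coord j 0 = 0"
  using coord_scale[of j 0 0] by simp
lemma coord_sum: "coord j (\<Sum>s\<in>A. f s) = (\<Sum>s\<in>A. coord j (f s))"
  by (induct A rule: infinite_finite_induct) auto

lemma coord_lincomb: "j < n \<Longrightarrow> coord j (\<Sum>s<n. sE (c s) (a s)) = c j"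
  by (simp add: coord_sum coord(2) if_distrib cong: if_cong)

section \<open>The matrix coalgebra spanned by the entries of Y\<close>

lemma eps_y: assumes "i < n" "j < n" shows "\<epsilon> (y i j) = (if i = j then 1 else 0)"
proof -
  have b: "bilinear sK sE sE (\<lambda>u v. sE (\<epsilon> u) v)" unfolding bilinear_def by (simp add: algebra_simps E.scale_left_distrib)
  have "(\<Sum>s<n. sE (\<epsilon> (y i s)) (a s)) = a i" using lsum_rho_basis_E[OF b assms(1)] rho_counit[of "a i"] by simp
  then have "coord j (\<Sum>s<n. sE (\<epsilon> (y i s)) (a s)) = coord j (a i)" by simp
  then show ?thesis using assms by (simp add: coord_lincomb coord(2))
qed

lemma linear_functionalD:
  assumes "Vector_Spaces.linear sE ((*) :: 'k \<Rightarrow> 'k \<Rightarrow> 'k) \<phi>"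
  shows "\<phi> (x + z) = \<phi> x + \<phi> z" "\<phi> (sE c x) = c * \<phi> x"
  using assms by (simp_all add: Vector_Spaces.linear_iff)

lemma bilinear_mult_functional:
  assumes b: "bil_KK_k \<beta>" and \<phi>: "Vector_Spaces.linear sE (*) \<phi>"
  shows "bil_KE_k (\<lambda>p q. \<beta> u p * \<phi> q)"
  unfolding bilinear_def
  by (simp add: bilinearD[OF b] linear_functionalD[OF \<phi>] distrib_left distrib_right mult_ac)

lemma bilinear_lsum_Delta_functional:
  assumes b: "bil_KK_k \<beta>" and \<phi>: "Vector_Spaces.linear sE (*) \<phi>"
  shows "bil_KE_k (\<lambda>u v. lsum \<beta> (\<Delta> u) * \<phi> v)"
  unfolding bilinear_def
  by (simp add: lsum_Delta_add_k[OF b] lsum_Delta_scale_k[OF b] linear_functionalD[OF \<phi>]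
      distrib_left distrib_right mult_ac)

lemma bilinear_lsum_rho_functional:
  assumes b: "bil_KK_k \<beta>" and \<phi>: "Vector_Spaces.linear sE (*) \<phi>"
  shows "bil_KE_k (\<lambda>u v. lsum (\<lambda>p q. \<beta> u p * \<phi> q) (\<rho> v))"
  unfolding bilinear_def
proof (intro conjI allI)
  fix x x' v
  show "lsum (\<lambda>p q. \<beta> (x + x') p * \<phi> q) (\<rho> v) =
      lsum (\<lambda>p q. \<beta> x p * \<phi> q) (\<rho> v) + lsum (\<lambda>p q. \<beta> x' p * \<phi> q) (\<rho> v)"
    by (simp add: bilinearD[OF b] distrib_right lsum_add_fun)
  fix c
  show "lsum (\<lambda>p q. \<beta> (sK c x) p * \<phi> q) (\<rho> v) = c * lsum (\<lambda>p q. \<beta> x p * \<phi> q) (\<rho> v)"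
    by (simp add: bilinearD[OF b] lsum_scale_k[symmetric] mult.assoc)
next
  fix x v v'
  show "lsum (\<lambda>p q. \<beta> x p * \<phi> q) (\<rho> (v + v')) =
      lsum (\<lambda>p q. \<beta> x p * \<phi> q) (\<rho> v) + lsum (\<lambda>p q. \<beta> x p * \<phi> q) (\<rho> v')"
    by (rule lsum_rho_add_k[OF bilinear_mult_functional[OF b \<phi>]])
  fix c
  show "lsum (\<lambda>p q. \<beta> x p * \<phi> q) (\<rho> (sE c v)) = c * lsum (\<lambda>p q. \<beta> x p * \<phi> q) (\<rho> v)"
    by (rule lsum_rho_scale_k[OF bilinear_mult_functional[OF b \<phi>]])
qed

lemma lsum_rho_coassoc_functional:
  assumes b: "bil_KK_k \<beta>" and \<phi>: "Vector_Spaces.linear sE (*) \<phi>"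
  shows "lsum (\<lambda>u v. lsum \<beta> (\<Delta> u) * \<phi> v) (\<rho> x) = lsum (\<lambda>u v. lsum (\<lambda>p q. \<beta> u p * \<phi> q) (\<rho> v)) (\<rho> x)"
proof -
  have "trilinear sK sK sE (*) (\<lambda>p q v. \<beta> p q * \<phi> v)"
    unfolding trilinear_def
    by (simp add: bilinearD[OF b] linear_functionalD[OF \<phi>] distrib_left distrib_right mult_ac)
  from lsum_rho_coassoc_k[OF this] show ?thesis by (simp add: lsum_mult_right)
qed

lemma Delta_y:
  assumes i: "i < n" and j: "j < n"
  shows "teq2 sK sK (\<Delta> (y i j)) (map (\<lambda>s. (y i s, y s j)) [0..<n])"
proof (rule teq2_KI)
  fix \<beta> assume b: "bil_KK_k \<beta>"
  have "lsum \<beta> (\<Delta> (y i j)) = (\<Sum>s<n. lsum \<beta> (\<Delta> (y i s)) * coord j (a s))"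
    using j by (simp add: coord(2) sum_delta_right)
  also have "\<dots> = lsum (\<lambda>u v. lsum \<beta> (\<Delta> u) * coord j v) (\<rho> (a i))"
    by (rule lsum_rho_basis_k[OF bilinear_lsum_Delta_functional[OF b coord(1)] i, symmetric])
  also have "\<dots> = lsum (\<lambda>u v. lsum (\<lambda>p q. \<beta> u p * coord j q) (\<rho> v)) (\<rho> (a i))"
    by (rule lsum_rho_coassoc_functional[OF b coord(1)])
  also have "\<dots> = (\<Sum>s<n. lsum (\<lambda>p q. \<beta> (y i s) p * coord j q) (\<rho> (a s)))"
    by (rule lsum_rho_basis_k[OF bilinear_lsum_rho_functional[OF b coord(1)] i])
  also have "\<dots> = (\<Sum>s<n. \<beta> (y i s) (y s j))"
    using j by (intro sum.cong refl)
      (simp add: lsum_rho_basis_k[OF bilinear_mult_functional[OF b coord(1)]] coord(2) sum_delta_right)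
  also have "\<dots> = lsum \<beta> (map (\<lambda>s. (y i s, y s j)) [0..<n])"
    by (simp add: lsum_def o_def sum_list_map_upt)
  finally show "lsum \<beta> (\<Delta> (y i j)) = lsum \<beta> (map (\<lambda>s. (y i s, y s j)) [0..<n])" .
qed

lemma lsum_Delta_y:
  assumes "vector_space sc" "bilinear sK sK sc \<beta>" "i < n" "j < n"
  shows "lsum \<beta> (\<Delta> (y i j)) = (\<Sum>s<n. \<beta> (y i s) (y s j))"
  using teq2_eval[OF assms(1) Delta_y[OF assms(3,4)] assms(2)] by (simp add: lsum_def o_def sum_list_map_upt)

lemma sum_S_y_mult_y: assumes "i < n" "j < n" shows "(\<Sum>s<n. S (y i s) * y s j) = (if i = j then 1 else 0)"
proof -
  have b: "bil_KK_K (\<lambda>u v. S u * v)" unfolding bilinear_def by (simp add: algebra_simps)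
  show ?thesis using lsum_Delta_y[OF vector_space_K b assms] antipode_left[of "y i j"] eps_y[OF assms] by (cases "i = j") simp_all
qed

lemma sum_y_mult_S_y: assumes "i < n" "j < n" shows "(\<Sum>s<n. y i s * S (y s j)) = (if i = j then 1 else 0)"
proof -
  have b: "bil_KK_K (\<lambda>u v. u * S v)" unfolding bilinear_def by (simp add: algebra_simps)
  show ?thesis using lsum_Delta_y[OF vector_space_K b assms] antipode_right[of "y i j"] eps_y[OF assms] by (cases "i = j") simp_all
qed

lemma linear_B_left: "Vector_Spaces.linear sE (*) (\<lambda>x. B x b)"
  using E_frob unfolding graded_frobenius_def by (elim conjE) (erule allE)
lemma linear_B_right: "Vector_Spaces.linear sE (*) (\<lambda>b. B x b)"
  using E_frob unfolding graded_frobenius_def by (elim conjE) (erule allE)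
lemma B_assoc: "B (x * z) w = B x (z * w)"
  using E_frob unfolding graded_frobenius_def by (elim conjE) (erule allE)+
lemma B_add_left[simp]: "B (x + x') z = B x z + B x' z" using linear_B_left[of z] by (simp add: Vector_Spaces.linear_iff)
lemma B_scale_left[simp]: "B (sE c x) z = c * B x z" using linear_B_left[of z] by (simp add: Vector_Spaces.linear_iff)
lemma B_add_right[simp]: "B x (z + z') = B x z + B x z'" using linear_B_right[of x] by (simp add: Vector_Spaces.linear_iff)
lemma B_scale_right[simp]: "B x (sE c z) = c * B x z" using linear_B_right[of x] by (simp add: Vector_Spaces.linear_iff)
lemma B_zero_left[simp]: "B 0 z = 0" using B_scale_left[of 0 0 z] by simp
lemma B_zero_right[simp]: "B x 0 = 0" using B_scale_right[of x 0 0] by simp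
lemma B_nondegenerate_left: "(\<And>z. B x z = 0) \<Longrightarrow> x = 0"
  using E_frob unfolding graded_frobenius_def by blast
lemma B_nondegenerate_right: "(\<And>x. B x z = 0) \<Longrightarrow> z = 0"
  using E_frob unfolding graded_frobenius_def by blast
lemma B_graded: "x \<in> Egr i \<Longrightarrow> z \<in> Egr j \<Longrightarrow> i + j \<noteq> l \<Longrightarrow> B x z = 0"
  using E_frob unfolding graded_frobenius_def by blast

lemma B_sum_right: "B x (\<Sum>d\<in>F. f d) = (\<Sum>d\<in>F. B x (f d))"
  by (induct F rule: infinite_finite_induct) auto
lemma B_sum_left: "B (\<Sum>d\<in>F. f d) z = (\<Sum>d\<in>F. B (f d) z)"
  by (induct F rule: infinite_finite_induct) auto

lemma subspace_Egr: "E.subspace (Egr d)" using E_cga by (simp add: connected_graded_algebra_def)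
lemma Egr0: "Egr 0 = range (\<lambda>c. sE c 1)" using E_cga by (simp add: connected_graded_algebra_def)
lemma graded_decomposition: "\<exists>c. (\<forall>d. c d \<in> Egr d) \<and> finite {d. c d \<noteq> 0} \<and> w = (\<Sum>d\<in>{d. c d \<noteq> 0}. c d)"
proof -
  have "\<forall>e. \<exists>!c. (\<forall>d. c d \<in> Egr d) \<and> finite {d. c d \<noteq> 0} \<and> e = (\<Sum>d\<in>{d. c d \<noteq> 0}. c d)"
    using E_cga unfolding connected_graded_algebra_def by (elim conjE)
  then show ?thesis by (meson ex1_implies_ex)
qed

definition psi :: "'e \<Rightarrow> 'k" where "psi w = B w 1"

lemma psi_add[simp]: "psi (x + z) = psi x + psi z" by (simp add: psi_def)
lemma psi_scale[simp]: "psi (sE c x) = c * psi x" by (simp add: psi_def)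
lemma psi_zero[simp]: "psi 0 = 0" by (simp add: psi_def)
lemma psi_diff: "psi (x - z) = psi x - psi z"
  using psi_add[of "x - z" z] by (simp add: algebra_simps)
lemma psi_sum: "psi (\<Sum>d\<in>F. f d) = (\<Sum>d\<in>F. psi (f d))" by (simp add: psi_def B_sum_left)
lemma B_psi: "B x z = psi (x * z)" by (simp add: psi_def B_assoc)

lemma one_in_Egr0: "1 \<in> Egr 0" using Egr0 by (metis E.scale_one rangeI)

lemma psi_graded: "x \<in> Egr d \<Longrightarrow> d \<noteq> l \<Longrightarrow> psi x = 0"
  unfolding psi_def using B_graded[OF _ one_in_Egr0] by simp

lemma top_degree_eq_zero:
  assumes x: "x \<in> Egr l" and p: "psi x = 0"
  shows "x = 0"
proof (rule B_nondegenerate_left)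
  fix z
  obtain c where c: "\<forall>d. c d \<in> Egr d" "z = (\<Sum>d\<in>{d. c d \<noteq> 0}. c d)" using graded_decomposition[of z] by blast
  have "B x (c d) = 0" for d
  proof (cases "d = 0")
    case True
    then obtain k where "c d = sE k 1" using c(1) Egr0 by (metis rangeE)
    then show ?thesis using p by (simp add: psi_def)
  next
    case False
    then show ?thesis using B_graded[OF x c(1)[rule_format, of d]] by simp
  qed
  then show "B x z = 0" using c(2) by (simp add: B_sum_right)
qed

lemma psi_fe_nonzero: "psi fe \<noteq> 0" using top_degree_eq_zero[OF fe_l] fe_nz by blast

lemma top_degree_multiple_fe:
  assumes x: "x \<in> Egr l"
  shows "x = sE (psi x / psi fe) fe"
proof -
  let ?x' = "x - sE (psi x / psi fe) fe"
  have "?x' \<in> Egr l"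
    using subspace_Egr[of l] x fe_l by (simp add: E.subspace_diff E.subspace_scale)
  moreover have "psi ?x' = 0" using psi_fe_nonzero by (simp add: psi_diff)
  ultimately have "?x' = 0" by (rule top_degree_eq_zero)
  then show ?thesis by simp
qed

lemma bilinear_psi: "bilinear sK sE sK (\<lambda>u v. sK (psi v) u)"
  unfolding bilinear_def by (simp add: scale_left_distrib scale_right_distrib)

lemma lsum_rho_sum_K: "bilinear sK sE sK \<beta> \<Longrightarrow> lsum \<beta> (\<rho> (\<Sum>d\<in>F. f d)) = (\<Sum>d\<in>F. lsum \<beta> (\<rho> (f d)))"
  by (induct F rule: infinite_finite_induct) (auto simp: lsum_rho_zero_K lsum_rho_add_K)

text \<open>
  Only the top-degree component of \<open>w\<close>, a multiple of \<open>fe\<close>, contributes, and \<open>\<rho>(fe) = D \<otimes> fe\<close>.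
\<close>

lemma lsum_rho_psi: "lsum (\<lambda>u v. sK (psi v) u) (\<rho> w) = sK (psi w) D"
proof -
  obtain c where c: "\<forall>d. c d \<in> Egr d" "w = (\<Sum>d\<in>{d. c d \<noteq> 0}. c d)" using graded_decomposition[of w] by blast
  have each: "lsum (\<lambda>u v. sK (psi v) u) (\<rho> (c d)) = sK (psi (c d)) D" for d
  proof (cases "d = l")
    case True
    then have cl: "c d = sE (psi (c d) / psi fe) fe" using top_degree_multiple_fe c(1) by blast
    have "lsum (\<lambda>u v. sK (psi v) u) (\<rho> (sE (psi (c d) / psi fe) fe)) = sK (psi (c d) / psi fe) (sK (psi fe) D)"
      by (simp add: lsum_rho_scale_K[OF bilinear_psi] lsum_rho_top_K[OF bilinear_psi])
    also have "\<dots> = sK (psi (c d)) D" using psi_fe_nonzero by simp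
    finally show ?thesis using cl by metis
  next
    case False
    obtain t where t: "snd ` set t \<subseteq> Egr d" "teq2 sK sE (\<rho> (c d)) t" using rho_graded c(1) by blast
    have "lsum (\<lambda>u v. sK (psi v) u) (\<rho> (c d)) = lsum (\<lambda>u v. sK (psi v) u) t"
      by (rule teq2_eval[OF vector_space_K t(2) bilinear_psi])
    also have "\<dots> = 0"
    proof -
      have "lsum (\<lambda>u v. sK (psi v) u) t = lsum (\<lambda>u v. 0) t"
        by (rule lsum_cong) (use t(1) False psi_graded in force)
      then show ?thesis by simp
    qed
    finally show ?thesis using psi_graded[OF c(1)[rule_format] False] by simp
  qed
  have "lsum (\<lambda>u v. sK (psi v) u) (\<rho> w) = (\<Sum>d\<in>{d. c d \<noteq> 0}. sK (psi (c d)) D)"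
    using c(2) by (simp add: lsum_rho_sum_K[OF bilinear_psi] each)
  also have "\<dots> = sK (psi w) D" using c(2) by (simp add: psi_sum scale_sum_left)
  finally show ?thesis .
qed

lemma psi_nakayama: "i < n \<Longrightarrow> psi (a i * z) = (\<Sum>j<n. \<alpha> i j * psi (z * a j))"
proof -
  assume i: "i < n"
  have "psi (a i * z) = B (a i) z" by (simp add: B_psi)
  also have "\<dots> = B z (\<mu> (a i))" by (rule B_nakayama)
  also have "\<dots> = (\<Sum>j<n. \<alpha> i j * psi (z * a j))" using alpha i by (simp add: B_sum_right) (simp add: B_psi)
  finally show ?thesis .
qed

text \<open>
  \<open>psi_coeff j z = (id \<otimes> \<psi>(- a\<^sub>j)) \<rho>(z)\<close>. Expanding \<open>(id \<otimes> \<psi>) \<rho>\<close> at \<open>z a\<^sub>i\<close> and at \<open>a\<^sub>i z\<close>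
  expresses \<open>D\<close> through these elements in two ways.
\<close>

definition psi_coeff :: "nat \<Rightarrow> 'e \<Rightarrow> 'a" where
  "psi_coeff j z = lsum (\<lambda>p q. sK (psi (q * a j)) p) (\<rho> z)"

lemma psi_coeff_mult_y: assumes i: "i < n"
  shows "(\<Sum>s<n. psi_coeff s z * y i s) = sK (psi (z * a i)) D"
proof -
  have b: "bilinear sK sE sK (\<lambda>c d. sK (psi (q * d)) (p * c))" for p q
    unfolding bilinear_def by (simp add: distrib_left distrib_right scale_left_distrib scale_right_distrib)
  have "sK (psi (z * a i)) D = lsum (\<lambda>u v. sK (psi v) u) (\<rho> (z * a i))" by (simp add: lsum_rho_psi)
  also have "\<dots> = lsum (\<lambda>p q. lsum (\<lambda>c d. sK (psi (q * d)) (p * c)) (\<rho> (a i))) (\<rho> z)"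
    by (rule lsum_rho_mult_K[OF bilinear_psi])
  also have "\<dots> = lsum (\<lambda>p q. \<Sum>s<n. sK (psi (q * a s)) (p * y i s)) (\<rho> z)"
    by (rule lsum_cong) (simp add: lsum_rho_basis_K[OF b i])
  also have "\<dots> = (\<Sum>s<n. psi_coeff s z * y i s)"
    by (simp add: lsum_sum psi_coeff_def lsum_mult_right)
  finally show ?thesis by simp
qed

lemma y_mult_psi_coeff: assumes i: "i < n"
  shows "(\<Sum>s<n. y i s * (\<Sum>j<n. sK (\<alpha> s j) (psi_coeff j z))) = sK (\<Sum>j<n. \<alpha> i j * psi (z * a j)) D"
proof -
  have b: "bilinear sK sE sK (\<lambda>p q. lsum (\<lambda>c d. sK (psi (q * d)) (p * c)) (\<rho> z))"
    unfolding bilinear_def by (simp add: distrib_left distrib_right scale_left_distrib scale_right_distrib lsum_add_fun lsum_scale_K[symmetric] mult.commute)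
  have inner: "lsum (\<lambda>c d. sK (psi (a s * d)) c) (\<rho> z) = (\<Sum>j<n. sK (\<alpha> s j) (psi_coeff j z))" if s: "s < n" for s
    using s by (simp add: psi_nakayama scale_sum_left lsum_sum psi_coeff_def lsum_scale_K[symmetric])
  have "sK (\<Sum>j<n. \<alpha> i j * psi (z * a j)) D = sK (psi (a i * z)) D" by (simp add: psi_nakayama i)
  also have "\<dots> = lsum (\<lambda>u v. sK (psi v) u) (\<rho> (a i * z))" by (simp add: lsum_rho_psi)
  also have "\<dots> = lsum (\<lambda>p q. lsum (\<lambda>c d. sK (psi (q * d)) (p * c)) (\<rho> z)) (\<rho> (a i))"
    by (rule lsum_rho_mult_K[OF bilinear_psi])
  also have "\<dots> = (\<Sum>s<n. lsum (\<lambda>c d. sK (psi (a s * d)) (y i s * c)) (\<rho> z))"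
    by (rule lsum_rho_basis_K[OF b i])
  also have "\<dots> = (\<Sum>s<n. y i s * lsum (\<lambda>c d. sK (psi (a s * d)) c) (\<rho> z))"
    by (simp add: lsum_mult_left)
  also have "\<dots> = (\<Sum>s<n. y i s * (\<Sum>j<n. sK (\<alpha> s j) (psi_coeff j z)))"
    by (rule sum.cong) (auto simp: inner)
  finally show ?thesis by simp
qed

section \<open>The homological codeterminant is grouplike\<close>

lemma eps_D: "\<epsilon> D = 1"
proof -
  have b: "bilinear sK sE sE (\<lambda>u v. sE (\<epsilon> u) v)" unfolding bilinear_def by (simp add: algebra_simps E.scale_left_distrib)
  have "sE (\<epsilon> D) fe = sE 1 fe" using lsum_rho_top_E[OF b] rho_counit[of fe] by simp
  then show ?thesis using fe_nz E.scale_cancel_right by blast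
qed

lemma grouplike_D: "grouplike D"
  unfolding grouplike_def
proof
  obtain \<phi> where \<phi>: "Vector_Spaces.linear sE ((*) :: 'k \<Rightarrow> 'k \<Rightarrow> 'k) \<phi>" "\<phi> fe = 1"
    using exists_functional_nonzero[OF vector_space_E fe_nz] by blast
  show "teq2 sK sK (\<Delta> D) [(D, D)]"
  proof (rule teq2_KI)
    fix \<beta> assume b: "bil_KK_k \<beta>"
    have "lsum \<beta> (\<Delta> D) = lsum (\<lambda>u v. lsum \<beta> (\<Delta> u) * \<phi> v) (\<rho> fe)"
      by (simp add: lsum_rho_top_k[OF bilinear_lsum_Delta_functional[OF b \<phi>(1)]] \<phi>(2))
    also have "\<dots> = lsum (\<lambda>u v. lsum (\<lambda>p q. \<beta> u p * \<phi> q) (\<rho> v)) (\<rho> fe)"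
      by (rule lsum_rho_coassoc_functional[OF b \<phi>(1)])
    also have "\<dots> = \<beta> D D"
      by (simp add: lsum_rho_top_k[OF bilinear_lsum_rho_functional[OF b \<phi>(1)]]
          lsum_rho_top_k[OF bilinear_mult_functional[OF b \<phi>(1)]] \<phi>(2))
    finally show "lsum \<beta> (\<Delta> D) = lsum \<beta> [(D, D)]" by simp
  qed
  show "\<epsilon> D = 1" by (rule eps_D)
qed

section \<open>Conjugating \<open>S\<^sup>2(Y)\<close> by \<open>D\<close> twists \<open>Y\<close> by \<open>\<alpha>\<close>\<close>

lemma psi_pairing_nondegenerate:
  assumes H: "\<And>z. (\<Sum>m<n. sK (psi (z * a m)) (X m)) = 0" and m: "m < n"
  shows "X m = 0"
proof (rule ccontr)
  assume "X m \<noteq> 0"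
  then obtain \<phi> where \<phi>: "Vector_Spaces.linear sK ((*) :: 'k \<Rightarrow> 'k \<Rightarrow> 'k) \<phi>" "\<phi> (X m) = 1"
    using exists_functional_nonzero[OF vector_space_K] by blast
  have \<phi>sc: "\<phi> (sK c x) = c * \<phi> x" for c x using \<phi>(1) by (simp add: Vector_Spaces.linear_iff)
  have \<phi>add: "\<phi> (x + x') = \<phi> x + \<phi> x'" for x x' using \<phi>(1) by (simp add: Vector_Spaces.linear_iff)
  have \<phi>0: "\<phi> 0 = 0" using \<phi>sc[of 0 0] by simp
  have \<phi>sum: "\<phi> (\<Sum>s\<in>A. f s) = (\<Sum>s\<in>A. \<phi> (f s))" for A f
    by (induct A rule: infinite_finite_induct) (auto simp: \<phi>0 \<phi>add)
  define w where "w = (\<Sum>m<n. sE (\<phi> (X m)) (a m))"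
  have "B z w = 0" for z
  proof -
    have "B z w = (\<Sum>m<n. \<phi> (X m) * psi (z * a m))"
      by (simp add: w_def B_sum_right) (simp add: B_psi)
    also have "\<dots> = \<phi> (\<Sum>m<n. sK (psi (z * a m)) (X m))"
      by (simp add: \<phi>sum \<phi>sc mult.commute)
    also have "\<dots> = 0" using H[of z] by (simp add: \<phi>0)
    finally show ?thesis .
  qed
  then have "w = 0" by (rule B_nondegenerate_right)
  then have "\<phi> (X m) = 0" using basis_coeff_eq_zero[of "\<lambda>m. \<phi> (X m)" m] m by (simp add: w_def)
  then show False using \<phi>(2) by simp
qed

lemma S_psi_coeff: assumes t: "t < n"
  shows "S (psi_coeff t z) = (\<Sum>i<n. sK (psi (z * a i)) (y t i * S D))"
proof -
  have e: "(\<Sum>s<n. S (y i s) * S (psi_coeff s z)) = sK (psi (z * a i)) (S D)" if i: "i < n" for i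
  proof -
    have "S (\<Sum>s<n. psi_coeff s z * y i s) = S (sK (psi (z * a i)) D)" by (simp add: psi_coeff_mult_y[OF i])
    then show ?thesis by (simp add: S_sum S_mult)
  qed
  have "S (psi_coeff t z) = (\<Sum>s<n. (if t = s then 1 else 0) * S (psi_coeff s z))"
    using t by (simp add: sum_delta_left)
  also have "\<dots> = (\<Sum>s<n. (\<Sum>i<n. y t i * S (y i s)) * S (psi_coeff s z))"
    by (rule sum.cong) (auto simp: sum_y_mult_S_y t)
  also have "\<dots> = (\<Sum>i<n. y t i * (\<Sum>s<n. S (y i s) * S (psi_coeff s z)))"
    by (simp add: sum_distrib_left sum_distrib_right mult.assoc) (rule sum.swap)
  also have "\<dots> = (\<Sum>i<n. y t i * sK (psi (z * a i)) (S D))"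
    by (rule sum.cong) (auto simp: e)
  finally show ?thesis by simp
qed

text \<open>
  Tested against the functionals \<open>\<psi>(z a\<^sub>m)\<close>, which separate by nondegeneracy of \<open>B\<close>, this is the
  image under \<open>S\<close> of \<open>y_mult_psi_coeff\<close>, rewritten with \<open>S_psi_coeff\<close>.
\<close>

lemma alpha_y_S_D_S_y: assumes i: "i < n" and m: "m < n"
  shows "(\<Sum>s<n. \<Sum>j<n. sK (\<alpha> s j) (y j m * S D * S (y i s))) = sK (\<alpha> i m) (S D)"
proof -
  define X where "X m = (\<Sum>s<n. \<Sum>j<n. sK (\<alpha> s j) (y j m * S D * S (y i s))) - sK (\<alpha> i m) (S D)" for m
  have "(\<Sum>m<n. sK (psi (z * a m)) (X m)) = 0" for z
  proof -
    have s1: "(\<Sum>s<n. \<Sum>j<n. sK (\<alpha> s j) (S (psi_coeff j z) * S (y i s))) = sK (\<Sum>j<n. \<alpha> i j * psi (z * a j)) (S D)"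
    proof -
      have "S (\<Sum>s<n. y i s * (\<Sum>j<n. sK (\<alpha> s j) (psi_coeff j z))) = S (sK (\<Sum>j<n. \<alpha> i j * psi (z * a j)) D)"
        by (simp add: y_mult_psi_coeff[OF i])
      then show ?thesis by (simp add: S_sum S_mult sum_distrib_right)
    qed
    have s2: "(\<Sum>s<n. \<Sum>j<n. sK (\<alpha> s j) (S (psi_coeff j z) * S (y i s))) =
       (\<Sum>m<n. sK (psi (z * a m)) (\<Sum>s<n. \<Sum>j<n. sK (\<alpha> s j) (y j m * S D * S (y i s))))"
    proof -
      have "(\<Sum>s<n. \<Sum>j<n. sK (\<alpha> s j) (S (psi_coeff j z) * S (y i s))) =
          (\<Sum>s<n. \<Sum>j<n. \<Sum>m<n. sK (psi (z * a m)) (sK (\<alpha> s j) (y j m * S D * S (y i s))))"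
        by (rule sum.cong[OF refl], rule sum.cong[OF refl])
          (simp add: S_psi_coeff scale_sum_right sum_distrib_right mult.assoc mult.commute)
      also have "\<dots> = (\<Sum>m<n. \<Sum>s<n. \<Sum>j<n. sK (psi (z * a m)) (sK (\<alpha> s j) (y j m * S D * S (y i s))))"
        by (rule sum_swap3)
      also have "\<dots> = (\<Sum>m<n. sK (psi (z * a m)) (\<Sum>s<n. \<Sum>j<n. sK (\<alpha> s j) (y j m * S D * S (y i s))))"
        by (simp add: scale_sum_right)
      finally show ?thesis .
    qed
    have s3: "sK (\<Sum>j<n. \<alpha> i j * psi (z * a j)) (S D) = (\<Sum>m<n. sK (psi (z * a m)) (sK (\<alpha> i m) (S D)))"
      by (simp add: scale_sum_left mult.commute)
    show ?thesis using s1 s2 s3 by (simp add: X_def scale_right_diff_distrib sum_subtractf)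
  qed
  then have "X m = 0" using psi_pairing_nondegenerate m by blast
  then show ?thesis by (simp add: X_def)
qed

lemma alpha_S2_y_D_S_y: assumes i: "i < n" and m: "m < n"
  shows "(\<Sum>s<n. \<Sum>j<n. sK (\<alpha> s j) (S (S (y i s)) * D * S (y j m))) = sK (\<alpha> i m) D"
proof -
  have "S (\<Sum>s<n. \<Sum>j<n. sK (\<alpha> s j) (y j m * S D * S (y i s))) = S (sK (\<alpha> i m) (S D))"
    by (simp add: alpha_y_S_D_S_y[OF i m])
  then show ?thesis by (simp add: S_sum S_mult grouplike_SS[OF grouplike_D] mult.assoc)
qed

lemma alpha_S2_y_D: assumes i: "i < n" and t: "t < n"
  shows "(\<Sum>s<n. sK (\<alpha> s t) (S (S (y i s)) * D)) = (\<Sum>m<n. sK (\<alpha> i m) (D * y m t))"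
proof -
  have "(\<Sum>m<n. (\<Sum>s<n. \<Sum>j<n. sK (\<alpha> s j) (S (S (y i s)) * D * S (y j m))) * y m t) = (\<Sum>m<n. sK (\<alpha> i m) D * y m t)"
    by (rule sum.cong) (auto simp: alpha_S2_y_D_S_y[OF i])
  moreover have "(\<Sum>m<n. (\<Sum>s<n. \<Sum>j<n. sK (\<alpha> s j) (S (S (y i s)) * D * S (y j m))) * y m t) =
      (\<Sum>s<n. \<Sum>j<n. sK (\<alpha> s j) (S (S (y i s)) * D * (\<Sum>m<n. S (y j m) * y m t)))"
  proof -
    have "(\<Sum>m<n. (\<Sum>s<n. \<Sum>j<n. sK (\<alpha> s j) (S (S (y i s)) * D * S (y j m))) * y m t) =
        (\<Sum>m<n. \<Sum>s<n. \<Sum>j<n. sK (\<alpha> s j) (S (S (y i s)) * D * S (y j m) * y m t))"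
      by (simp add: sum_distrib_right)
    also have "\<dots> = (\<Sum>s<n. \<Sum>j<n. \<Sum>m<n. sK (\<alpha> s j) (S (S (y i s)) * D * S (y j m) * y m t))"
      by (rule sum_swap3[symmetric])
    also have "\<dots> = (\<Sum>s<n. \<Sum>j<n. sK (\<alpha> s j) (S (S (y i s)) * D * (\<Sum>m<n. S (y j m) * y m t)))"
      by (simp add: sum_distrib_left scale_sum_right mult.assoc)
    finally show ?thesis .
  qed
  moreover have "(\<Sum>s<n. \<Sum>j<n. sK (\<alpha> s j) (S (S (y i s)) * D * (\<Sum>m<n. S (y j m) * y m t))) =
      (\<Sum>s<n. sK (\<alpha> s t) (S (S (y i s)) * D))"
  proof (rule sum.cong[OF refl])
    fix s assume "s \<in> {..<n}"
    have "(\<Sum>j<n. sK (\<alpha> s j) (S (S (y i s)) * D * (\<Sum>m<n. S (y j m) * y m t))) =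
        (\<Sum>j<n. sK (\<alpha> s j) (S (S (y i s)) * D) * (if j = t then 1 else 0))"
      by (rule sum.cong) (auto simp: sum_S_y_mult_y t)
    also have "\<dots> = sK (\<alpha> s t) (S (S (y i s)) * D)" by (rule sum_delta_right[OF t])
    finally show "(\<Sum>j<n. sK (\<alpha> s j) (S (S (y i s)) * D * (\<Sum>m<n. S (y j m) * y m t))) = sK (\<alpha> s t) (S (S (y i s)) * D)" .
  qed
  ultimately show ?thesis by (simp add: mult.assoc)
qed

lemma alpha_conj_S2_y: assumes i: "i < n" and t: "t < n"
  shows "(\<Sum>s<n. sK (\<alpha> s t) (S D * S (S (y i s)) * D)) = (\<Sum>m<n. sK (\<alpha> i m) (y m t))"
proof -
  have "S D * (\<Sum>s<n. sK (\<alpha> s t) (S (S (y i s)) * D)) = S D * (\<Sum>m<n. sK (\<alpha> i m) (D * y m t))"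
    by (simp add: alpha_S2_y_D[OF i t])
  then show ?thesis
    by (simp add: sum_distrib_left mult.assoc grouplike_S_inverse(2)[OF grouplike_D, unfolded mult.assoc] flip: mult.assoc)
qed

lemma alpha_y_alpha_inv:
  assumes bet: "\<forall>s<n. \<forall>j<n. (\<Sum>m<n. \<alpha> s m * \<beta> m j) = (if s = j then 1 else 0)"
    and i: "i < n" and j: "j < n"
  shows "(\<Sum>k<n. \<Sum>m<n. sK (\<alpha> i k * \<beta> m j) (y k m)) = S D * S (S (y i j)) * D"
proof -
  have "(\<Sum>k<n. \<Sum>m<n. sK (\<alpha> i k * \<beta> m j) (y k m)) = (\<Sum>m<n. sK (\<beta> m j) (\<Sum>k<n. sK (\<alpha> i k) (y k m)))"
    by (subst sum.swap) (simp add: scale_sum_right mult.commute)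
  also have "\<dots> = (\<Sum>m<n. sK (\<beta> m j) (\<Sum>s<n. sK (\<alpha> s m) (S D * S (S (y i s)) * D)))"
    by (rule sum.cong) (auto simp: alpha_conj_S2_y[OF i])
  also have "\<dots> = (\<Sum>m<n. \<Sum>s<n. sK (\<alpha> s m * \<beta> m j) (S D * S (S (y i s)) * D))"
    by (simp add: scale_sum_right mult.commute)
  also have "\<dots> = (\<Sum>s<n. \<Sum>m<n. sK (\<alpha> s m * \<beta> m j) (S D * S (S (y i s)) * D))"
    by (rule sum.swap)
  also have "\<dots> = (\<Sum>s<n. sK (\<Sum>m<n. \<alpha> s m * \<beta> m j) (S D * S (S (y i s)) * D))"
    by (simp add: scale_sum_left)
  also have "\<dots> = (\<Sum>s<n. sK (if s = j then 1 else 0) (S D * S (S (y i s)) * D))"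
    by (rule sum.cong) (auto simp: bet j)
  also have "\<dots> = (\<Sum>s<n. if s = j then S D * S (S (y i s)) * D else 0)"
    by (rule sum.cong) auto
  also have "\<dots> = S D * S (S (y i j)) * D"
    using j by (simp add: sum.delta')
  finally show ?thesis .
qed

section \<open>The entries of \<open>Y\<close> generate \<open>K\<close>\<close>

lemma rho_zero: "teq2 sK sE (\<rho> 0) []"
proof (rule teq2I)
  fix \<beta> :: "'a \<Rightarrow> 'e \<Rightarrow> 'k" assume b: "bil_KE_k \<beta>"
  show "lsum \<beta> (\<rho> 0) = lsum \<beta> []" using lsum_rho_zero_k[OF b] by simp
qed

definition hull_gens :: "'a set" where
  "hull_gens = {(S ^^ k) (y i j) | k i j. i < n \<and> j < n}"

definition hopf_hull :: "'a set" where
  "hopf_hull = span (prod_list ` {xs. set xs \<subseteq> hull_gens})"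

lemma subspace_hopf_hull: "subspace hopf_hull" unfolding hopf_hull_def by simp

lemma one_in_hopf_hull: "1 \<in> hopf_hull"
  unfolding hopf_hull_def by (rule span_base) (auto intro: image_eqI[where x="[]"])

lemma prod_list_hull_gens_mult: "p \<in> prod_list ` {xs. set xs \<subseteq> hull_gens} \<Longrightarrow> q \<in> prod_list ` {xs. set xs \<subseteq> hull_gens} \<Longrightarrow>
  p * q \<in> prod_list ` {xs. set xs \<subseteq> hull_gens}"
  by (auto intro!: image_eqI[where x="_ @ _"])

lemma hopf_hull_mult: assumes x: "x \<in> hopf_hull" and z: "z \<in> hopf_hull" shows "x * z \<in> hopf_hull"
proof -
  let ?M = "prod_list ` {xs. set xs \<subseteq> hull_gens}"
  have base: "p * w \<in> hopf_hull" if p: "p \<in> ?M" and w: "w \<in> hopf_hull" for p w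
    using w unfolding hopf_hull_def
  proof (induct rule: span_induct)
    case base show ?case unfolding subspace_def
      by (auto simp: distrib_left span_zero span_add span_scale)
  next
    case (step q) then show ?case using prod_list_hull_gens_mult[OF p] by (simp add: span_base)
  qed
  show ?thesis using x
    unfolding hopf_hull_def[of]
  proof (induct rule: span_induct)
    case base show ?case unfolding subspace_def
      using z by (auto simp: distrib_right subspace_hopf_hull[unfolded hopf_hull_def] span_zero span_add span_scale hopf_hull_def)
  next
    case (step p) then show ?case using base[OF _ z] by (simp add: hopf_hull_def)
  qed
qed

lemma y_in_hull_gens: "i < n \<Longrightarrow> j < n \<Longrightarrow> y i j \<in> hull_gens"
  unfolding hull_gens_def by (intro CollectI exI[of _ 0] exI[of _ i] exI[of _ j]) simp

lemma hull_gens_S: assumes "g \<in> hull_gens" shows "S g \<in> hull_gens"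
proof -
  obtain k i j where g: "g = (S ^^ k) (y i j)" "i < n" "j < n" using assms unfolding hull_gens_def by auto
  then have "S g = (S ^^ Suc k) (y i j)" by simp
  then show ?thesis unfolding hull_gens_def using g(2,3) by blast
qed

lemma hull_gens_hopf_hull: "g \<in> hull_gens \<Longrightarrow> g \<in> hopf_hull"
  unfolding hopf_hull_def by (rule span_base) (auto intro: image_eqI[where x="[g]"])

lemma hopf_hull_S: assumes x: "x \<in> hopf_hull" shows "S x \<in> hopf_hull"
  using x unfolding hopf_hull_def
proof (induct rule: span_induct)
  case base show ?case unfolding subspace_def
    by (auto simp: span_zero span_add span_scale)
next
  case (step p)
  then obtain xs where xs: "set xs \<subseteq> hull_gens" "p = prod_list xs" by auto
  have "set (rev (map S xs)) \<subseteq> hull_gens" using xs(1) hull_gens_S by auto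
  then show ?case using xs(2) by (auto simp: S_prod_list intro!: span_base)
qed

lemma S_stable_subalgebra_hopf_hull: "S_stable_subalgebra hopf_hull"
  unfolding S_stable_subalgebra_def
  using subspace_hopf_hull one_in_hopf_hull hopf_hull_mult hopf_hull_S by blast

lemma hopf_hull_least:
  assumes X: "S_stable_subalgebra X" and y: "\<And>i j. i < n \<Longrightarrow> j < n \<Longrightarrow> y i j \<in> X"
  shows "hopf_hull \<subseteq> X"
proof -
  have sub: "subspace X" and one: "1 \<in> X" and mult: "\<And>x z. x \<in> X \<Longrightarrow> z \<in> X \<Longrightarrow> x * z \<in> X"
    and S_X: "\<And>x. x \<in> X \<Longrightarrow> S x \<in> X"
    using X unfolding S_stable_subalgebra_def by auto
  have gens: "g \<in> X" if "g \<in> hull_gens" for g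
  proof -
    obtain k i j where g: "g = (S ^^ k) (y i j)" "i < n" "j < n"
      using \<open>g \<in> hull_gens\<close> unfolding hull_gens_def by auto
    have "(S ^^ k) (y i j) \<in> X" by (induct k) (auto simp: S_X y[OF g(2,3)])
    then show ?thesis using g by simp
  qed
  have "prod_list xs \<in> X" if "set xs \<subseteq> hull_gens" for xs
    using that by (induct xs) (auto simp: one mult gens)
  then have "prod_list ` {xs. set xs \<subseteq> hull_gens} \<subseteq> X" by auto
  then show ?thesis unfolding hopf_hull_def by (rule span_minimal[OF _ sub])
qed

lemma hopf_subalgebra_hopf_hull: "hopf_subalgebra sK \<Delta> S hopf_hull"
proof (rule hopf_subalgebraI[OF S_stable_subalgebra_hopf_hull])
  have "y i j \<in> Delta_into hopf_hull" if "i < n" "j < n" for i j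
  proof -
    have "set (map (\<lambda>s. (y i s, y s j)) [0..<n]) \<subseteq> hopf_hull \<times> hopf_hull"
      using that by (auto intro!: hull_gens_hopf_hull y_in_hull_gens)
    then show ?thesis using Delta_y[OF that] unfolding Delta_into_def by blast
  qed
  then have "hopf_hull \<subseteq> hopf_hull \<inter> Delta_into hopf_hull"
    by (intro hopf_hull_least S_stable_subalgebra_Delta_into S_stable_subalgebra_hopf_hull)
      (auto intro: hull_gens_hopf_hull y_in_hull_gens)
  then show "hopf_hull \<subseteq> Delta_into hopf_hull" by blast
qed

lemma hopf_hull_rho:
  assumes w: "w \<in> Egr 1"
  shows "\<exists>t. set t \<subseteq> hopf_hull \<times> Egr 1 \<and> teq2 sK sE (\<rho> w) t"
proof -
  let ?C = "{x. \<exists>t. set t \<subseteq> hopf_hull \<times> Egr 1 \<and> teq2 sK sE (\<rho> x) t}"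
  have "E.subspace ?C"
    unfolding E.subspace_def
  proof (intro conjI ballI allI)
    show "0 \<in> ?C" using rho_zero by (auto intro!: exI[of _ "[]"])
  next
    fix x z assume "x \<in> ?C" "z \<in> ?C"
    then obtain t u where t: "set t \<subseteq> hopf_hull \<times> Egr 1" "teq2 sK sE (\<rho> x) t"
      and u: "set u \<subseteq> hopf_hull \<times> Egr 1" "teq2 sK sE (\<rho> z) u" by auto
    have "teq2 sK sE (\<rho> (x + z)) (t @ u)" using teq2_trans[OF rho_add teq2_append[OF t(2) u(2)]] .
    then show "x + z \<in> ?C" using t(1) u(1) by (auto intro!: exI[of _ "t @ u"])
  next
    fix c x assume "x \<in> ?C"
    then obtain t where t: "set t \<subseteq> hopf_hull \<times> Egr 1" "teq2 sK sE (\<rho> x) t" by auto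
    have "teq2 sK sE (\<rho> (sE c x)) (scale_left_tens sK c t)"
      using teq2_trans[OF rho_scale teq2_scale_left_tens[OF t(2)]] .
    moreover have "set (scale_left_tens sK c t) \<subseteq> hopf_hull \<times> Egr 1"
      using t(1) subspace_hopf_hull unfolding scale_left_tens_def subspace_def by auto
    ultimately show "sE c x \<in> ?C" by blast
  qed
  moreover have "a ` {..<n} \<subseteq> ?C"
  proof
    fix x assume "x \<in> a ` {..<n}"
    then obtain i where i: "i < n" "x = a i" by auto
    have "set (map (\<lambda>s. (y i s, a s)) [0..<n]) \<subseteq> hopf_hull \<times> Egr 1"
      using i a_span by (auto intro!: hull_gens_hopf_hull E.span_base y_in_hull_gens)
    then show "x \<in> ?C" using Ymat i by blast
  qed
  ultimately have "Egr 1 \<subseteq> ?C" using a_span E.span_minimal by blast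
  then show ?thesis using w by blast
qed

text \<open>This is the only use of inner-faithfulness.\<close>

lemma hopf_hull_UNIV: "hopf_hull = UNIV"
  using inner_faithful hopf_subalgebra_hopf_hull hopf_hull_rho unfolding inner_faithful_E1_def by blast

lemma hopf_endo_eqI:
  assumes f: "hopf_endo sK \<Delta> \<epsilon> S f" and g: "hopf_endo sK \<Delta> \<epsilon> S g"
    and fg: "\<And>i j. i < n \<Longrightarrow> j < n \<Longrightarrow> f (y i j) = g (y i j)"
  shows "f = g"
proof -
  have "hopf_hull \<subseteq> {x. f x = g x}"
    by (rule hopf_hull_least[OF S_stable_subalgebra_equalizer[OF f g]]) (simp add: fg)
  then show ?thesis using hopf_hull_UNIV by auto
qed

lemma surj_hopf_endoI:
  assumes f: "hopf_endo sK \<Delta> \<epsilon> S f" and y: "\<And>i j. i < n \<Longrightarrow> j < n \<Longrightarrow> y i j \<in> range f"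
  shows "surj f"
  using hopf_hull_least[OF S_stable_subalgebra_range[OF f] y] hopf_hull_UNIV by auto

section \<open>Invertibility of the matrix of the Nakayama automorphism\<close>

lemma lincomb_swap:
  "(\<Sum>j<n. sE (c j) (\<Sum>k<n. sE (d j k) (a k))) = (\<Sum>k<n. sE (\<Sum>j<n. c j * d j k) (a k))"
  by (simp add: E.scale_sum_right E.scale_sum_left) (rule sum.swap)

lemma basis_as_lincomb: "i < n \<Longrightarrow> a i = (\<Sum>k<n. sE (if i = k then 1 else 0) (a k))"
proof -
  assume i: "i < n"
  have "(\<Sum>k<n. sE (if i = k then 1 else 0) (a k)) = (\<Sum>k<n. if i = k then a k else 0)"
    by (rule sum.cong) auto
  also have "\<dots> = a i" using i by simp
  finally show ?thesis by simp
qed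

lemma mu_sum: "\<mu> (\<Sum>j\<in>A. f j) = (\<Sum>j\<in>A. \<mu> (f j))"
  using mu_scale[of 0 0] by (induct A rule: infinite_finite_induct) (auto simp: mu_add)

lemma mu_lincomb: "\<mu> (\<Sum>j<n. sE (c j) (a j)) = (\<Sum>k<n. sE (\<Sum>j<n. c j * \<alpha> j k) (a k))"
proof -
  have "\<mu> (\<Sum>j<n. sE (c j) (a j)) = (\<Sum>j<n. sE (c j) (\<Sum>k<n. sE (\<alpha> j k) (a k)))"
    using alpha by (simp add: mu_sum mu_scale)
  also have "\<dots> = (\<Sum>k<n. sE (\<Sum>j<n. c j * \<alpha> j k) (a k))" by (rule lincomb_swap)
  finally show ?thesis .
qed

lemma ex_mu_preimage_basis: "i < n \<Longrightarrow> \<exists>c. \<mu> (\<Sum>j<n. sE (c j) (a j)) = a i"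
proof -
  assume "i < n"
  then have "a i \<in> \<mu> ` Egr 1"
    unfolding mu_Egr using a_span by (auto intro: E.span_base)
  then obtain w where "w \<in> Egr 1" "a i = \<mu> w" by auto
  moreover obtain c where "w = (\<Sum>j<n. sE (c j) (a j))"
    using span_basis_repr \<open>w \<in> Egr 1\<close> a_span by auto
  ultimately show ?thesis by auto
qed

lemma alpha_invertible:
  "\<exists>\<beta>. (\<forall>i j. n \<le> i \<or> n \<le> j \<longrightarrow> \<beta> i j = 0) \<and>
      (\<forall>i<n. \<forall>j<n. (\<Sum>k<n. \<alpha> i k * \<beta> k j) = (if i = j then 1 else 0)) \<and>
      (\<forall>i<n. \<forall>j<n. (\<Sum>k<n. \<beta> i k * \<alpha> k j) = (if i = j then 1 else 0))"
proof -
  define \<beta> where "\<beta> i j = (if i < n \<and> j < n then (SOME c. \<mu> (\<Sum>j<n. sE (c j) (a j)) = a i) j else 0)"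
    for i j
  have preimage: "\<mu> (\<Sum>j<n. sE (\<beta> i j) (a j)) = a i" if "i < n" for i
  proof -
    have "(\<Sum>j<n. sE (\<beta> i j) (a j)) = (\<Sum>j<n. sE ((SOME c. \<mu> (\<Sum>j<n. sE (c j) (a j)) = a i) j) (a j))"
      by (rule sum.cong) (auto simp: \<beta>_def that)
    then show ?thesis using someI_ex[OF ex_mu_preimage_basis[OF that]] by simp
  qed
  have left: "(\<Sum>k<n. \<beta> i k * \<alpha> k j) = (if i = j then 1 else 0)" if "i < n" "j < n" for i j
  proof -
    have "(\<Sum>k<n. sE (\<Sum>m<n. \<beta> i m * \<alpha> m k) (a k)) = (\<Sum>k<n. sE (if i = k then 1 else 0) (a k))"
      using preimage[OF that(1)] basis_as_lincomb[OF that(1)] by (simp add: mu_lincomb)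
    from basis_coeff_unique[OF this that(2)] show ?thesis by simp
  qed
  have right: "(\<Sum>k<n. \<alpha> i k * \<beta> k j) = (if i = j then 1 else 0)" if "i < n" "j < n" for i j
  proof -
    have "\<mu> (\<Sum>k<n. sE (\<Sum>m<n. \<alpha> i m * \<beta> m k) (a k)) = \<mu> (\<Sum>m<n. sE (\<alpha> i m) (\<Sum>k<n. sE (\<beta> m k) (a k)))"
      by (simp add: lincomb_swap)
    also have "\<dots> = (\<Sum>m<n. sE (\<alpha> i m) (\<mu> (\<Sum>k<n. sE (\<beta> m k) (a k))))"
      by (subst mu_sum) (simp only: mu_scale)
    also have "\<dots> = (\<Sum>m<n. sE (\<alpha> i m) (a m))"
      by (intro sum.cong refl) (simp add: preimage)
    also have "\<dots> = \<mu> (a i)" using alpha that(1) by simp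
    finally have "(\<Sum>k<n. sE (\<Sum>m<n. \<alpha> i m * \<beta> m k) (a k)) = (\<Sum>k<n. sE (if i = k then 1 else 0) (a k))"
      using inj_mu basis_as_lincomb[OF that(1)] by (simp add: inj_eq)
    from basis_coeff_unique[OF this that(2)] show ?thesis by simp
  qed
  have zero: "\<beta> i j = 0" if "n \<le> i \<or> n \<le> j" for i j
    using that by (auto simp: \<beta>_def)
  show ?thesis
    by (intro exI[of _ \<beta>] conjI allI impI) (simp_all add: zero left right)
qed

lemma mat_inv_alpha:
  assumes "i < n" "j < n"
  shows "(\<Sum>k<n. \<alpha> i k * mat_inv n \<alpha> k j) = (if i = j then 1 else 0)"
    and "(\<Sum>k<n. mat_inv n \<alpha> i k * \<alpha> k j) = (if i = j then 1 else 0)"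
proof -
  obtain \<beta> where zero: "\<forall>i j. n \<le> i \<or> n \<le> j \<longrightarrow> \<beta> i j = 0"
    and right: "\<forall>i<n. \<forall>j<n. (\<Sum>k<n. \<alpha> i k * \<beta> k j) = (if i = j then 1 else 0)"
    and left: "\<forall>i<n. \<forall>j<n. (\<Sum>k<n. \<beta> i k * \<alpha> k j) = (if i = j then 1 else 0)"
    using alpha_invertible by (elim exE conjE)
  have "mat_inv n \<alpha> = \<beta>" by (rule mat_inv_eqI[OF zero right left])
  then show "(\<Sum>k<n. \<alpha> i k * mat_inv n \<alpha> k j) = (if i = j then 1 else 0)"
    and "(\<Sum>k<n. mat_inv n \<alpha> i k * \<alpha> k j) = (if i = j then 1 else 0)"
    using right left assms by simp_all
qed

definition eta :: "'a \<Rightarrow> 'a" where "eta x = S D * S (S x) * D"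

lemma hopf_endo_eta: "hopf_endo sK \<Delta> \<epsilon> S eta"
  using hopf_endo_comp[OF hopf_endo_conj_grouplike[OF grouplike_D] hopf_endo_S2]
  by (simp add: comp_def eta_def[abs_def])

lemma linear_eta: "Vector_Spaces.linear sK sK eta"
  using hopf_endo_eta unfolding hopf_endo_def by blast

lemma eta_y: "i < n \<Longrightarrow> j < n \<Longrightarrow> eta (y i j) = (\<Sum>k<n. \<Sum>m<n. sK (\<alpha> i k * mat_inv n \<alpha> m j) (y k m))"
  using alpha_y_alpha_inv[of "mat_inv n \<alpha>" i j] mat_inv_alpha(1) by (simp add: eta_def)

lemma y_in_range_eta:
  assumes p: "p < n" and t: "t < n"
  shows "y p t \<in> range eta"
proof -
  have "y p t = (\<Sum>m<n. if p = m then y m t else 0)" using p by simp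
  also have "\<dots> = (\<Sum>m<n. sK (if p = m then 1 else 0) (y m t))" by (intro sum.cong refl) simp
  also have "\<dots> = (\<Sum>m<n. sK (\<Sum>i<n. mat_inv n \<alpha> p i * \<alpha> i m) (y m t))"
    using p by (intro sum.cong refl) (simp add: mat_inv_alpha(2))
  also have "\<dots> = (\<Sum>i<n. sK (mat_inv n \<alpha> p i) (\<Sum>m<n. sK (\<alpha> i m) (y m t)))"
    by (simp add: scale_sum_left scale_sum_right) (rule sum.swap)
  also have "\<dots> = (\<Sum>i<n. sK (mat_inv n \<alpha> p i) (\<Sum>s<n. sK (\<alpha> s t) (eta (y i s))))"
    using t by (intro sum.cong refl) (simp add: alpha_conj_S2_y eta_def)
  also have "\<dots> = eta (\<Sum>i<n. sK (mat_inv n \<alpha> p i) (\<Sum>s<n. sK (\<alpha> s t) (y i s)))"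
    by (simp only: linear_K_sum[OF linear_eta] linear_K_scale[OF linear_eta])
  finally show ?thesis by simp
qed

lemma hopf_endo_twist_iff:
  "hopf_endo sK \<Delta> \<epsilon> S f \<and>
     (\<forall>i<n. \<forall>j<n. f (y i j) = (\<Sum>k<n. \<Sum>m<n. sK (\<alpha> i k * mat_inv n \<alpha> m j) (y k m)))
   \<longleftrightarrow> f = eta"
proof
  assume f: "hopf_endo sK \<Delta> \<epsilon> S f \<and>
    (\<forall>i<n. \<forall>j<n. f (y i j) = (\<Sum>k<n. \<Sum>m<n. sK (\<alpha> i k * mat_inv n \<alpha> m j) (y k m)))"
  show "f = eta"
  proof (rule hopf_endo_eqI[OF conjunct1[OF f] hopf_endo_eta])
    fix i j assume "i < n" "j < n"
    then show "f (y i j) = eta (y i j)" using f eta_y by simp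
  qed
next
  assume "f = eta"
  then show "hopf_endo sK \<Delta> \<epsilon> S f \<and>
    (\<forall>i<n. \<forall>j<n. f (y i j) = (\<Sum>k<n. \<Sum>m<n. sK (\<alpha> i k * mat_inv n \<alpha> m j) (y k m)))"
    using hopf_endo_eta eta_y by simp
qed

lemma surj_S: "surj S"
  by (rule surj_S_if_surj_conj_S2[OF grouplike_D])
    (use surj_hopf_endoI[OF hopf_endo_eta y_in_range_eta] in \<open>simp add: eta_def[abs_def]\<close>)

end

theorem theorem3p2:

  fixes sK :: "'k::field \<Rightarrow> 'a::ring_1 \<Rightarrow> 'a"
    and \<Delta> :: "'a \<Rightarrow> ('a \<times> 'a) list" and \<epsilon> :: "'a \<Rightarrow> 'k" and S :: "'a \<Rightarrow> 'a"
    and sE :: "'k \<Rightarrow> 'e::ring_1 \<Rightarrow> 'e" and Egr :: "nat \<Rightarrow> 'e set"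
    and l :: nat and B :: "'e \<Rightarrow> 'e \<Rightarrow> 'k" and \<mu> :: "'e \<Rightarrow> 'e"
    and \<rho> :: "'e \<Rightarrow> ('a \<times> 'e) list"
    and fe :: 'e and D :: 'a
    and n :: nat and a :: "nat \<Rightarrow> 'e" and \<alpha> :: "nat \<Rightarrow> nat \<Rightarrow> 'k" and y :: "nat \<Rightarrow> nat \<Rightarrow> 'a"
  assumes K_hopf: "hopf_algebra sK \<Delta> \<epsilon> S"
    and E_cga: "connected_graded_algebra sE Egr"
    and E_frob: "graded_frobenius sE Egr l B"
    and mu_nak: "nakayama_aut sE Egr B \<mu>"
    and E_comod: "graded_comodule_algebra sK \<Delta> \<epsilon> sE Egr \<rho>"
    and inner_faithful: "inner_faithful_E1 sK \<Delta> S sE Egr \<rho>"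
    and fe_top: "fe \<in> Egr l" "fe \<noteq> 0"
    and codet: "teq2 sK sE (\<rho> fe) [(D, fe)]"
    and basis: "inj_on a {..<n}" "\<not> module.dependent sE (a ` {..<n})"
               "module.span sE (a ` {..<n}) = Egr 1"
    and alpha: "\<forall>i<n. \<mu> (a i) = (\<Sum>j<n. sE (\<alpha> i j) (a j))"
    and Ymat: "\<forall>i<n. teq2 sK sE (\<rho> (a i)) (map (\<lambda>s. (y i s, a s)) [0..<n])"
  shows "(\<exists>!f. hopf_endo sK \<Delta> \<epsilon> S f \<and>
            (\<forall>i<n. \<forall>j<n. f (y i j) =
               (\<Sum>k<n. \<Sum>m<n. sK (\<alpha> i k * mat_inv n \<alpha> m j) (y k m))))
       \<and> (\<forall>f. hopf_endo sK \<Delta> \<epsilon> S f \<and>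
            (\<forall>i<n. \<forall>j<n. f (y i j) =
               (\<Sum>k<n. \<Sum>m<n. sK (\<alpha> i k * mat_inv n \<alpha> m j) (y k m)))
          \<longrightarrow> (\<forall>i<n. \<forall>j<n. f (y i j) = ring_inv D * S (S (y i j)) * D)
            \<and> f = (\<lambda>x. ring_inv D * S (S x) * D))
       \<and> surj S"
proof -
  interpret frobenius_comodule sK \<Delta> \<epsilon> S sE Egr l B \<mu> \<rho> fe D n a \<alpha> y
    using assms by (intro frobenius_comodule.intro hopf_alg.intro frobenius_comodule_axioms.intro)
  have eta_eq: "eta = (\<lambda>x. ring_inv D * S (S x) * D)"
    by (simp add: eta_def[abs_def] ring_inv_grouplike[OF grouplike_D])
  show ?thesis
    unfolding hopf_endo_twist_iff eta_eq using surj_S by simp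
qed

end
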